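(* Let $X$ be a Banach space, $F$ a Banach lattice, and $T:X\to F$ a bounded linear operator. Then $T$ is limitedly L-weakly compact if and only if for every disjoint norm-bounded sequence $(f_n)$ in the dual $F'$ one has $T'f_n\to 0$ in the weak$^\ast$ topology of $X'$ (i.e. $f_n(Tx)\to 0$ for every $x\in X$).
   Context: All vector spaces are real and operators are linear and bounded; $T'$ denotes the adjoint of $T$. For a subset $A$ of a Banach lattice $F$, $\mathrm{sol}(A)=\bigcup_{a\in A}[-|a|,|a|]$ is its solid hull. A subset $A\subseteq F$ is an Lwc-set if every disjoint sequence in $\mathrm{sol}(A)$ is norm-null. A bounded subset $A$ of a Banach space $X$ is limited if every weak$^\ast$-null sequence $(g_n)$ in $X'$ converges to $0$ uniformly on $A$, i.e. $\sup_{a\in A}|g_n(a)|\to 0$. An operator $T:X\to F$ is limitedly L-weakly compact if $T$ maps every limited subset of $X$ onto an Lwc-subset of $F$. A sequence $(f_n)$ in $F'$ is disjoint if $|f_n|\wedge|f_m|=0$ for $n\ne m$. *)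

theory Defs
  imports "HOL-Analysis.Analysis"
begin

class banach_lattice = banach + lattice + ordered_ab_group_add +
  assumes scaleR_nonneg_bl: "0 \<le> x \<Longrightarrow> 0 \<le> c \<Longrightarrow> 0 \<le> scaleR c x"
  assumes lattice_norm_bl: "sup x (-x) \<le> sup y (-y) \<Longrightarrow> norm x \<le> norm y"

definition lat_abs :: "'b::banach_lattice \<Rightarrow> 'b" where
  "lat_abs x = sup x (-x)"

definition sol :: "'b::banach_lattice set \<Rightarrow> 'b set" where
  "sol A = (\<Union>a\<in>A. {y. lat_abs y \<le> lat_abs a})"

definition disjoint_seq :: "(nat \<Rightarrow> 'b::banach_lattice) \<Rightarrow> bool" where
  "disjoint_seq x \<longleftrightarrow> (\<forall>n m. n \<noteq> m \<longrightarrow> inf (lat_abs (x n)) (lat_abs (x m)) = 0)"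

definition Lwc_set :: "'b::banach_lattice set \<Rightarrow> bool" where
  "Lwc_set A \<longleftrightarrow> (\<forall>x. (\<forall>n. x n \<in> sol A) \<and> disjoint_seq x \<longrightarrow> (\<lambda>n. norm (x n)) \<longlonglongrightarrow> 0)"

definition limited_set :: "'a::banach set \<Rightarrow> bool" where
  "limited_set A \<longleftrightarrow> bounded A \<and>
     (\<forall>g :: nat \<Rightarrow> ('a \<Rightarrow>\<^sub>L real).
        (\<forall>x. (\<lambda>n. blinfun_apply (g n) x) \<longlonglongrightarrow> 0) \<longrightarrow>
        (\<forall>e>0. \<forall>\<^sub>F n in sequentially. \<forall>a\<in>A. \<bar>blinfun_apply (g n) a\<bar> < e))"

definition limitedly_LWC :: "('a::banach \<Rightarrow> 'b::banach_lattice) \<Rightarrow> bool" where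
  "limitedly_LWC T \<longleftrightarrow> (\<forall>A. limited_set A \<longrightarrow> Lwc_set (T ` A))"

text \<open>Order structure of the dual F' (Riesz--Kantorovich formulas):
for x \<ge> 0, |f|(x) = sup {f y : -x \<le> y \<le> x} and
(|f| \<and> |g|)(x) = inf {|f|(y) + |g|(x - y) : 0 \<le> y \<le> x}.
Two functionals are disjoint iff |f| \<and> |g| = 0, i.e. vanishes on the positive cone.\<close>
definition dual_abs :: "('b::banach_lattice \<Rightarrow>\<^sub>L real) \<Rightarrow> 'b \<Rightarrow> real" where
  "dual_abs f x = Sup {blinfun_apply f y | y. - x \<le> y \<and> y \<le> x}"

definition dual_disjoint :: "('b::banach_lattice \<Rightarrow>\<^sub>L real) \<Rightarrow> ('b \<Rightarrow>\<^sub>L real) \<Rightarrow> bool" where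
  "dual_disjoint f g \<longleftrightarrow>
     (\<forall>x. 0 \<le> x \<longrightarrow> Inf {dual_abs f y + dual_abs g (x - y) | y. 0 \<le> y \<and> y \<le> x} = 0)"

end

(* If T is limitedly L-weakly compact, then {Tx} is an Lwc-set because singletons are limited:
   every disjoint sequence in [0, u], u = |Tx|, is norm-null. For such u, every decreasing
   sequence in [0, u] is norm-Cauchy; otherwise its differences, truncated to (g_k - delta u)^+,
   would form an n-wise disjoint sequence bounded away from 0, and repeatedly meeting with a fixed
   term reduces n until the sequence is almost disjoint and can be disjointified. Taking limits
   of decreasing meets of pieces that separate two disjoint functionals, a bounded disjoint
   sequence (f_n) in F' yields disjoint y_n in [0, u] with |f_n|(y_n) >= |f_n|(u) - eta. Since
   the y_n are norm-null, |f_n|(u) -> 0, hence f_n(Tx) -> 0.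

   Conversely, let A be limited and (x_n) a disjoint sequence in sol T(A), |x_n| <= |T a_n|,
   with norms bounded below. By Hahn-Banach there are functionals F_n of norm at most 1 with
   |F_n(T a_n)| >= ||x_n|| / 2 whose moduli are dominated by components of positive functionals
   in the bands generated by elements v_n of [0, |x_n|]. The v_n are disjoint, hence so are the
   F_n, so by hypothesis the functionals F_n o T are weak*-null, and since A is limited,
   F_n(T a_n) -> 0, a contradiction. *)

theory Submission
  imports Defs "HOL-Library.Lattice_Algebras"
begin

section \<open>Lattice-ordered groups and vector lattices\<close>

lemma scaleR_left_mono_banach_lattice:
  fixes x y :: "'a::banach_lattice"
  assumes "x \<le> y" "0 \<le> a"
  shows "a *\<^sub>R x \<le> a *\<^sub>R y"
proof -
  have "0 \<le> a *\<^sub>R (y - x)" using assms by (intro scaleR_nonneg_bl) simp_all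
  thus ?thesis by (simp add: scaleR_diff_right)
qed

lemma scaleR_right_mono_banach_lattice:
  fixes x :: "'a::banach_lattice"
  assumes "a \<le> b" "0 \<le> x"
  shows "a *\<^sub>R x \<le> b *\<^sub>R x"
proof -
  have "0 \<le> (b - a) *\<^sub>R x" using assms by (intro scaleR_nonneg_bl) simp_all
  thus ?thesis by (simp add: scaleR_diff_left)
qed

instance banach_lattice \<subseteq> lattice_ab_group_add ..

instance banach_lattice \<subseteq> ordered_real_vector
  by standard (simp_all add: scaleR_left_mono_banach_lattice scaleR_right_mono_banach_lattice)

lemma sup_uminus_nonneg: "0 \<le> sup x (- x)" for x :: "'a::lattice_ab_group_add"
proof -
  have "x + - x \<le> sup x (- x) + sup x (- x)" by (intro add_mono) auto
  thus ?thesis by simp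
qed

lemma pprt_add_pprt_uminus: "pprt x + pprt (- x) = sup x (- x)" for x :: "'a::lattice_ab_group_add"
proof -
  have "pprt x + pprt (- x) = sup (x + sup (- x) 0) (0 + sup (- x) 0)"
    unfolding pprt_def by (rule add_sup_distrib_right)
  also have "x + sup (- x) 0 = sup (x + - x) (x + 0)" by (rule add_sup_distrib_left)
  also have "sup (sup (x + - x) (x + 0)) (0 + sup (- x) 0) = sup (sup x (- x)) 0"
    by (simp add: sup_aci)
  finally show ?thesis using sup_uminus_nonneg[of x] by (simp add: sup_absorb1)
qed

lemma inf_pprt_pprt_uminus: "inf (pprt x) (pprt (- x)) = 0" for x :: "'a::lattice_ab_group_add"
proof -
  have "sup (pprt x) (pprt (- x)) = sup (sup x (- x)) 0"
    unfolding pprt_def by (simp add: sup_commute sup_left_commute)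
  hence "sup (pprt x) (pprt (- x)) = pprt x + pprt (- x)"
    using sup_uminus_nonneg[of x] by (simp add: pprt_add_pprt_uminus sup_absorb1)
  thus ?thesis using add_eq_inf_sup[of "pprt x" "pprt (- x)"] by simp
qed

lemma pprt_diff_pprt_uminus: "pprt x - pprt (- x) = x" for x :: "'a::lattice_ab_group_add"
  using prts[of x] by (simp add: pprt_neg)

lemma diff_inf_eq_pprt: "a - inf a b = pprt (a - b)" for a b :: "'a::lattice_ab_group_add"
  unfolding diff_inf_eq_sup pprt_def by (simp add: add_sup_distrib_left sup_commute)

lemma pprt_add_le: "pprt (x + y) \<le> pprt x + pprt y" for x y :: "'a::lattice_ab_group_add"
  unfolding pprt_def by (auto intro: add_mono add_nonneg_nonneg)

lemma sup_le_add_nonneg: "0 \<le> a \<Longrightarrow> 0 \<le> b \<Longrightarrow> sup a b \<le> a + b" for a b :: "'a::lattice_ab_group_add"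
  by (auto intro: add_increasing add_increasing2)

lemma inf_add_le_add_inf:
  fixes x y z :: "'a::lattice_ab_group_add"
  assumes "0 \<le> x" "0 \<le> y" "0 \<le> z"
  shows "inf (x + y) z \<le> inf x z + inf y z"
proof -
  have "inf (x + y) z \<le> inf (x + y) (x + z)" "inf (x + y) z \<le> inf (z + y) (z + z)"
    using assms by (auto intro: le_infI2 add_increasing add_increasing2)
  thus ?thesis by (simp add: add_inf_distrib_left add_inf_distrib_right)
qed

lemma inf_eq_0_mono:
  fixes x y x' y' :: "'a::{zero, lattice}"
  assumes "0 \<le> x'" "x' \<le> x" "0 \<le> y'" "y' \<le> y" "inf x y = 0"
  shows "inf x' y' = 0"
proof (rule order.antisym)
  have "inf x' y' \<le> inf x y" using assms by (intro inf_mono)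
  thus "inf x' y' \<le> 0" using assms by simp
qed (use assms in simp)

lemma inf_sum_eq_0:
  fixes z :: "'a::lattice_ab_group_add"
  assumes "finite I" "0 \<le> z" "\<And>i. i \<in> I \<Longrightarrow> 0 \<le> x i" "\<And>i. i \<in> I \<Longrightarrow> inf z (x i) = 0"
  shows "inf z (\<Sum>i\<in>I. x i) = 0"
  using assms(1,3,4)
proof (induction I rule: finite_induct)
  case empty thus ?case using assms(2) by (simp add: inf_absorb2)
next
  case (insert a I)
  have "0 \<le> (\<Sum>i\<in>I. x i)" using insert by (intro sum_nonneg) auto
  hence "inf (x a + (\<Sum>i\<in>I. x i)) z \<le> inf (x a) z + inf (\<Sum>i\<in>I. x i) z"
    using insert assms(2) by (intro inf_add_le_add_inf) auto
  also have "\<dots> = 0" using insert by (simp add: inf_commute)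
  finally show ?case
    using insert \<open>0 \<le> (\<Sum>i\<in>I. x i)\<close> assms(2) by (intro order.antisym) (auto simp: inf_commute)
qed

lemma scaleR_inf_nonneg:
  fixes x y :: "'a::{ordered_real_vector, lattice}"
  assumes "0 \<le> c"
  shows "c *\<^sub>R inf x y = inf (c *\<^sub>R x) (c *\<^sub>R y)"
proof (cases "c = 0")
  case False
  hence c: "0 < c" using assms by simp
  let ?m = "inf (c *\<^sub>R x) (c *\<^sub>R y)"
  have "(1 / c) *\<^sub>R ?m \<le> x" "(1 / c) *\<^sub>R ?m \<le> y"
    using c scaleR_left_mono[of ?m "c *\<^sub>R x" "1 / c"] scaleR_left_mono[of ?m "c *\<^sub>R y" "1 / c"]
    by simp_all
  hence "c *\<^sub>R ((1 / c) *\<^sub>R ?m) \<le> c *\<^sub>R inf x y"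
    using c by (intro scaleR_left_mono le_infI) auto
  hence "?m \<le> c *\<^sub>R inf x y" using c by simp
  moreover have "c *\<^sub>R inf x y \<le> ?m"
    using assms by (intro le_infI scaleR_left_mono) auto
  ultimately show ?thesis by (rule order.antisym[rotated])
qed simp

lemma scaleR_sup_nonneg:
  fixes x y :: "'a::{ordered_real_vector, lattice}"
  assumes "0 \<le> c"
  shows "c *\<^sub>R sup x y = sup (c *\<^sub>R x) (c *\<^sub>R y)"
proof (cases "c = 0")
  case False
  hence c: "0 < c" using assms by simp
  let ?m = "sup (c *\<^sub>R x) (c *\<^sub>R y)"
  have "x \<le> (1 / c) *\<^sub>R ?m" "y \<le> (1 / c) *\<^sub>R ?m"
    using c scaleR_left_mono[of "c *\<^sub>R x" ?m "1 / c"] scaleR_left_mono[of "c *\<^sub>R y" ?m "1 / c"]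
    by simp_all
  hence "c *\<^sub>R sup x y \<le> c *\<^sub>R ((1 / c) *\<^sub>R ?m)"
    using c by (intro scaleR_left_mono le_supI) auto
  hence "c *\<^sub>R sup x y \<le> ?m" using c by simp
  moreover have "?m \<le> c *\<^sub>R sup x y"
    using assms by (intro le_supI scaleR_left_mono) auto
  ultimately show ?thesis by (rule order.antisym)
qed simp

lemma pprt_scaleR: "0 \<le> c \<Longrightarrow> pprt (c *\<^sub>R x) = c *\<^sub>R pprt x"
  for x :: "'a::{ordered_real_vector, lattice_ab_group_add}"
  unfolding pprt_def by (simp add: scaleR_sup_nonneg)

lemma inf_scaleR_eq_0:
  fixes x y :: "'a::{ordered_real_vector, lattice}"
  assumes "0 \<le> x" "0 \<le> y" "inf x y = 0" "0 \<le> c" "0 \<le> d"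
  shows "inf (c *\<^sub>R x) (d *\<^sub>R y) = 0"
proof (rule order.antisym)
  have "inf (c *\<^sub>R x) (d *\<^sub>R y) \<le> inf (max c d *\<^sub>R x) (max c d *\<^sub>R y)"
    using assms by (intro inf_mono scaleR_right_mono) auto
  also have "\<dots> = 0" using assms by (simp add: scaleR_inf_nonneg[symmetric])
  finally show "inf (c *\<^sub>R x) (d *\<^sub>R y) \<le> 0" .
qed (use assms in \<open>simp add: scaleR_nonneg_nonneg\<close>)

section \<open>The modulus and the lattice norm\<close>

lemma lat_abs_nonneg: "0 \<le> lat_abs x"
  unfolding lat_abs_def by (rule sup_uminus_nonneg)

lemma lat_abs_eq_self: "0 \<le> x \<Longrightarrow> lat_abs x = x"
  unfolding lat_abs_def by (simp add: sup_absorb1 order.trans[of "- x" 0 x])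

lemma lat_abs_eq_pprt_add_pprt_uminus: "lat_abs x = pprt x + pprt (- x)"
  unfolding lat_abs_def by (simp add: pprt_add_pprt_uminus)

lemma norm_le_if_lat_abs_le: "lat_abs x \<le> lat_abs y \<Longrightarrow> norm x \<le> norm y"
  using lattice_norm_bl unfolding lat_abs_def by blast

lemma norm_lat_abs: "norm (lat_abs x) = norm x"
  by (intro order.antisym norm_le_if_lat_abs_le) (simp_all add: lat_abs_eq_self lat_abs_nonneg)

lemma norm_mono_nonneg: "0 \<le> x \<Longrightarrow> x \<le> y \<Longrightarrow> norm x \<le> norm y" for x y :: "'a::banach_lattice"
  by (rule norm_le_if_lat_abs_le) (simp add: lat_abs_eq_self)

lemma norm_le_add_if_le_add:
  "0 \<le> a \<Longrightarrow> a \<le> b + c \<Longrightarrow> norm a \<le> norm b + norm c" for a b c :: "'a::banach_lattice"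
  using norm_mono_nonneg norm_triangle_ineq order.trans by blast

lemma norm_pprt_le: "norm (pprt x) \<le> norm x" for x :: "'a::banach_lattice"
proof (rule norm_le_if_lat_abs_le)
  show "lat_abs (pprt x) \<le> lat_abs x"
    using lat_abs_nonneg[of x] by (simp add: lat_abs_eq_self) (simp add: pprt_def lat_abs_def)
qed

lemma norm_le_if_in_interval:
  fixes x y :: "'a::banach_lattice"
  assumes "- x \<le> y" "y \<le> x"
  shows "norm y \<le> norm x"
proof -
  have "lat_abs y \<le> x" unfolding lat_abs_def using assms by (simp add: minus_le_iff)
  moreover have "0 \<le> x" using lat_abs_nonneg calculation by (rule order.trans)
  ultimately show ?thesis by (simp add: norm_le_if_lat_abs_le lat_abs_eq_self)
qed

lemma blinfun_le_norm_if_in_interval: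
  fixes f :: "'a::banach_lattice \<Rightarrow>\<^sub>L real"
  shows "- x \<le> y \<Longrightarrow> y \<le> x \<Longrightarrow> blinfun_apply f y \<le> norm f * norm x"
  using norm_blinfun[of f y] norm_le_if_in_interval[of x y] norm_ge_zero[of f]
  by (smt (verit, ccfv_threshold) mult_left_mono real_norm_def)

lemma closed_nonneg: "closed {x :: 'a::banach_lattice. 0 \<le> x}"
  unfolding closed_sequential_limits
proof (intro allI impI, elim conjE)
  fix X :: "nat \<Rightarrow> 'a" and x assume X: "\<forall>n. X n \<in> {x. 0 \<le> x}" "X \<longlonglongrightarrow> x"
  have "norm (pprt (- x)) \<le> norm (X n - x)" for n
  proof (rule norm_le_if_lat_abs_le)
    have "pprt (- x) \<le> pprt (X n - x)" using X(1) by (intro pprt_mono) simp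
    also have "\<dots> \<le> lat_abs (X n - x)" by (simp add: lat_abs_eq_pprt_add_pprt_uminus)
    finally show "lat_abs (pprt (- x)) \<le> lat_abs (X n - x)" by (simp add: lat_abs_eq_self)
  qed
  moreover have "(\<lambda>n. norm (X n - x)) \<longlonglongrightarrow> 0"
    using X(2) by (simp add: LIM_zero tendsto_norm_zero)
  ultimately have "norm (pprt (- x)) \<le> 0"
    by (intro LIMSEQ_le_const) auto
  thus "x \<in> {x. 0 \<le> x}" by (simp add: le_zero_iff_zero_pprt[symmetric])
qed

lemma lattice_tendsto_lowerbound:
  fixes X :: "'i \<Rightarrow> 'a::banach_lattice"
  assumes "(X \<longlongrightarrow> x) F" "eventually (\<lambda>n. a \<le> X n) F" "F \<noteq> bot"
  shows "a \<le> x"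
proof -
  have "closed ((\<lambda>y. y - a) -` {y. 0 \<le> y})"
    by (intro continuous_closed_vimage closed_nonneg continuous_intros)
  hence "x \<in> (\<lambda>y. y - a) -` {y. 0 \<le> y}"
    using assms by (intro Lim_in_closed_set[of _ X]) auto
  thus ?thesis by simp
qed

lemma lattice_tendsto_upperbound:
  fixes X :: "'i \<Rightarrow> 'a::banach_lattice"
  assumes "(X \<longlongrightarrow> x) F" "eventually (\<lambda>n. X n \<le> a) F" "F \<noteq> bot"
  shows "x \<le> a"
proof -
  have "closed ((\<lambda>y. a - y) -` {y. 0 \<le> y})"
    by (intro continuous_closed_vimage closed_nonneg continuous_intros)
  hence "x \<in> (\<lambda>y. a - y) -` {y. 0 \<le> y}"
    using assms by (intro Lim_in_closed_set[of _ X]) auto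
  thus ?thesis by simp
qed

section \<open>The modulus of a functional\<close>

lemma bdd_above_dual_interval:
  fixes f :: "'a::banach_lattice \<Rightarrow>\<^sub>L real"
  shows "bdd_above {blinfun_apply f y | y. - x \<le> y \<and> y \<le> x}"
  by (rule bdd_aboveI[where M = "norm f * norm x"]) (auto simp: blinfun_le_norm_if_in_interval)

lemma dual_abs_ge: "- x \<le> y \<Longrightarrow> y \<le> x \<Longrightarrow> blinfun_apply f y \<le> dual_abs f x"
  unfolding dual_abs_def by (rule cSup_upper) (use bdd_above_dual_interval in auto)

lemma dual_abs_leI:
  assumes "0 \<le> x" "\<And>y. - x \<le> y \<Longrightarrow> y \<le> x \<Longrightarrow> blinfun_apply f y \<le> c"
  shows "dual_abs f x \<le> c"
  unfolding dual_abs_def using assms by (intro cSup_least) (auto intro!: exI[of _ 0])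

lemma dual_abs_nonneg: "0 \<le> x \<Longrightarrow> 0 \<le> dual_abs f x"
  using dual_abs_ge[of x 0 f] by simp

lemma dual_abs_zero [simp]: "dual_abs f 0 = 0"
  by (intro order.antisym dual_abs_leI dual_abs_nonneg) auto

lemma dual_abs_le_norm: "0 \<le> x \<Longrightarrow> dual_abs f x \<le> norm f * norm x"
  by (rule dual_abs_leI) (simp_all add: blinfun_le_norm_if_in_interval)

lemma abs_le_dual_abs: "\<bar>blinfun_apply f y\<bar> \<le> dual_abs f (lat_abs y)"
proof -
  have "- lat_abs y \<le> y" "y \<le> lat_abs y" "- lat_abs y \<le> - y" "- y \<le> lat_abs y"
    unfolding lat_abs_def by (auto simp: minus_le_iff)
  hence "blinfun_apply f y \<le> dual_abs f (lat_abs y)" "blinfun_apply f (- y) \<le> dual_abs f (lat_abs y)"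
    by (auto intro: dual_abs_ge)
  thus ?thesis by (simp add: blinfun.minus_right)
qed

lemma dual_abs_mono:
  assumes "0 \<le> x" "x \<le> x'"
  shows "dual_abs f x \<le> dual_abs f x'"
proof (rule dual_abs_leI)
  fix y assume "- x \<le> y" "y \<le> x"
  moreover have "- x' \<le> - x" using assms(2) by simp
  ultimately show "blinfun_apply f y \<le> dual_abs f x'"
    using assms(2) by (intro dual_abs_ge) (rule order.trans, assumption+)+
qed fact

text \<open>Subadditivity rests on the Riesz decomposition \<open>w = w\<^sub>1 + w\<^sub>2\<close> of an element of
  \<open>[-(x + x'), x + x']\<close> with \<open>w\<^sub>1 \<in> [-x, x]\<close> and \<open>w\<^sub>2 \<in> [-x', x']\<close>.\<close>
lemma dual_abs_add_le:
  assumes "0 \<le> x" "0 \<le> x'"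
  shows "dual_abs f (x + x') \<le> dual_abs f x + dual_abs f x'"
proof (rule dual_abs_leI)
  show "0 \<le> x + x'" using assms by simp
  fix w assume w: "- (x + x') \<le> w" "w \<le> x + x'"
  define w1 where "w1 = inf (sup w (- x)) x"
  have "- x \<le> x" using assms by (meson neg_le_0_iff_le order.trans)
  hence w1: "- x \<le> w1" "w1 \<le> x" unfolding w1_def by (simp_all add: le_infI)
  have "w \<le> sup (x' + w) (x' + - x)" using assms by (simp add: le_supI1 add_increasing)
  moreover have "w \<le> x' + x" using w(2) by (simp add: add.commute)
  ultimately have "w \<le> x' + w1" unfolding w1_def by (simp add: add_inf_distrib_left add_sup_distrib_left)
  hence "w - w1 \<le> x'" by (simp add: algebra_simps)
  moreover have "sup w (- x) \<le> w + x'" using assms w(1) by (simp add: add_increasing2 algebra_simps)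
  hence "w1 \<le> w + x'" unfolding w1_def by (rule le_infI1)
  hence "- x' \<le> w - w1" by (simp add: algebra_simps)
  ultimately have "blinfun_apply f (w - w1) \<le> dual_abs f x'" by (rule dual_abs_ge[rotated])
  moreover have "blinfun_apply f w1 \<le> dual_abs f x" using w1 by (rule dual_abs_ge)
  ultimately show "blinfun_apply f w \<le> dual_abs f x + dual_abs f x'"
    by (simp add: blinfun.diff_right)
qed

lemma dual_abs_sum_le:
  assumes "\<And>i. i \<in> I \<Longrightarrow> 0 \<le> x i"
  shows "dual_abs f (\<Sum>i\<in>I. x i) \<le> (\<Sum>i\<in>I. dual_abs f (x i))"
  using assms
proof (induction I rule: infinite_finite_induct)
  case (insert a I)
  hence "dual_abs f (x a + (\<Sum>i\<in>I. x i)) \<le> dual_abs f (x a) + dual_abs f (\<Sum>i\<in>I. x i)"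
    by (intro dual_abs_add_le sum_nonneg) auto
  thus ?case using insert by simp
qed simp_all

lemma dual_abs_le_add_norm_diff:
  assumes "0 \<le> x" "0 \<le> y"
  shows "dual_abs f x \<le> dual_abs f y + norm f * norm (x - y)"
proof -
  have "x - y \<le> lat_abs (x - y)" unfolding lat_abs_def by simp
  hence "x \<le> y + lat_abs (x - y)" by (simp add: algebra_simps)
  hence "dual_abs f x \<le> dual_abs f (y + lat_abs (x - y))"
    using assms by (intro dual_abs_mono) auto
  also have "\<dots> \<le> dual_abs f y + dual_abs f (lat_abs (x - y))"
    using assms lat_abs_nonneg by (intro dual_abs_add_le) auto
  also have "dual_abs f (lat_abs (x - y)) \<le> norm f * norm (x - y)"
    using dual_abs_le_norm[OF lat_abs_nonneg, of f "x - y"] by (simp add: norm_lat_abs)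
  finally show ?thesis by simp
qed

lemma dual_disjointE:
  assumes "dual_disjoint f g" "0 \<le> x" "0 < d"
  obtains y where "0 \<le> y" "y \<le> x" "dual_abs f y + dual_abs g (x - y) < d"
proof -
  let ?S = "{dual_abs f y + dual_abs g (x - y) | y. 0 \<le> y \<and> y \<le> x}"
  have "Inf ?S < d" "?S \<noteq> {}" using assms unfolding dual_disjoint_def by auto
  thus ?thesis using that cInf_lessD[of ?S d] by blast
qed

lemma not_tendsto_0_subseq:
  fixes f :: "nat \<Rightarrow> real"
  assumes "\<not> f \<longlonglongrightarrow> 0"
  obtains r and \<sigma> :: "nat \<Rightarrow> nat" where "0 < r" "strict_mono \<sigma>" "\<And>n. r \<le> \<bar>f (\<sigma> n)\<bar>"
proof -
  obtain r where r: "0 < r" "\<not> (\<forall>\<^sub>F n in sequentially. \<bar>f n\<bar> < r)"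
    using assms unfolding tendsto_iff dist_real_def diff_0_right by blast
  hence "\<exists>\<^sub>F n in cofinite. r \<le> \<bar>f n\<bar>"
    unfolding cofinite_eq_sequentially not_eventually by (simp add: not_less)
  hence "infinite {n. r \<le> \<bar>f n\<bar>}" by (simp add: frequently_cofinite)
  from infinite_enumerate[OF this] obtain \<sigma> :: "nat \<Rightarrow> nat" where \<sigma>: "strict_mono \<sigma>" "\<forall>n. r \<le> \<bar>f (\<sigma> n)\<bar>"
    by auto
  show ?thesis by (rule that[of r \<sigma>]) (use r \<sigma> in auto)
qed

lemma subseq_eventually_small:
  fixes d :: "nat \<Rightarrow> nat \<Rightarrow> real"
  assumes lim: "\<And>j. d j \<longlonglongrightarrow> 0" and B: "\<And>j. 0 < B j"
  obtains \<sigma> :: "nat \<Rightarrow> nat" where "strict_mono \<sigma>" "\<And>i j. i < j \<Longrightarrow> d (\<sigma> i) (\<sigma> j) \<le> B j"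
proof -
  have next_index: "\<exists>l. s < l \<and> (\<forall>k\<le>s. d k l \<le> B (Suc j))" for s j
  proof -
    have "\<forall>\<^sub>F l in sequentially. s < l \<and> (\<forall>k\<in>{..s}. d k l < B (Suc j))"
      using lim B by (intro eventually_conj eventually_ball_finite eventually_gt_at_top ballI)
        (auto simp: order_tendsto_iff)
    then obtain N where "\<forall>l\<ge>N. s < l \<and> (\<forall>k\<in>{..s}. d k l < B (Suc j))"
      unfolding eventually_sequentially by blast
    thus ?thesis by (intro exI[of _ N]) (auto intro: less_imp_le)
  qed
  have "\<exists>\<sigma>. \<forall>j. True \<and> \<sigma> j < \<sigma> (Suc j) \<and> (\<forall>k\<le>\<sigma> j. d k (\<sigma> (Suc j)) \<le> B (Suc j))"
    by (rule dependent_nat_choice) (use next_index in auto)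
  then obtain \<sigma> :: "nat \<Rightarrow> nat"
    where \<sigma>: "\<And>j. \<sigma> j < \<sigma> (Suc j)" "\<And>j k. k \<le> \<sigma> j \<Longrightarrow> d k (\<sigma> (Suc j)) \<le> B (Suc j)"
    by blast
  show ?thesis
  proof (rule that)
    show mono: "strict_mono \<sigma>" using \<sigma>(1) by (simp add: strict_mono_Suc_iff)
    fix i j :: nat assume "i < j"
    then obtain j' where j': "j = Suc j'" by (cases j) auto
    hence "\<sigma> i \<le> \<sigma> j'" using \<open>i < j\<close> mono by (simp add: strict_mono_less_eq)
    thus "d (\<sigma> i) (\<sigma> j) \<le> B j" using \<sigma>(2) j' by simp
  qed
qed

lemma sum_le_if_lessThan_sums_le:
  fixes g :: "nat \<Rightarrow> 'a::ordered_comm_monoid_add"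
  assumes "\<And>k. 0 \<le> g k" "\<And>n. (\<Sum>k<n. g k) \<le> u" "finite I"
  shows "(\<Sum>i\<in>I. g i) \<le> u"
proof -
  have "(\<Sum>i\<in>I. g i) \<le> (\<Sum>i<Suc (Max (insert 0 I)). g i)"
    using assms(1,3) by (intro sum_mono2) (auto simp: less_Suc_eq_le)
  also have "\<dots> \<le> u" by (rule assms(2))
  finally show ?thesis .
qed

lemma sum_power_half_le: "finite M \<Longrightarrow> (\<Sum>m\<in>M. (1 / 2 :: real) ^ m) \<le> 2"
  using sum_le_suminf[OF summable_geometric[of "1 / 2 :: real"], of M] by (simp add: suminf_geometric)

lemma not_Cauchy_imp_far_later:
  fixes P :: "nat \<Rightarrow> 'a::metric_space"
  assumes "\<not> Cauchy P"
  obtains e where "0 < e" "\<And>M. \<exists>n>M. e \<le> dist (P M) (P n)"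
proof -
  obtain e where e: "0 < e" "\<And>M. \<exists>m\<ge>M. \<exists>n>m. e \<le> dist (P m) (P n)"
    using assms unfolding Cauchy_altdef by (auto simp: not_less)
  have "\<exists>n>M. e / 2 \<le> dist (P M) (P n)" for M
  proof -
    obtain m n where mn: "M \<le> m" "m < n" "e \<le> dist (P m) (P n)" using e(2) by blast
    have "dist (P m) (P n) \<le> dist (P M) (P m) + dist (P M) (P n)" by (rule dist_triangle3)
    hence "e / 2 \<le> dist (P M) (P m) \<or> e / 2 \<le> dist (P M) (P n)" using mn(3) by linarith
    thus ?thesis
    proof
      assume m: "e / 2 \<le> dist (P M) (P m)"
      hence "M \<noteq> m" using e(1) by auto
      with m mn(1) show ?thesis by (intro exI[of _ m]) simp
    next
      assume "e / 2 \<le> dist (P M) (P n)"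
      with mn(1,2) show ?thesis by (intro exI[of _ n]) simp
    qed
  qed
  thus ?thesis using that[of "e / 2"] e(1) by simp
qed

lemma suminf_nonneg_lattice:
  fixes f :: "nat \<Rightarrow> 'a::banach_lattice"
  assumes "summable f" "\<And>n. 0 \<le> f n"
  shows "0 \<le> suminf f"
  using assms by (intro lattice_tendsto_lowerbound[OF summable_LIMSEQ, of f] always_eventually allI sum_nonneg) auto

lemma term_le_suminf_lattice:
  fixes f :: "nat \<Rightarrow> 'a::banach_lattice"
  assumes "summable f" "\<And>n. 0 \<le> f n"
  shows "f j \<le> suminf f"
proof (rule lattice_tendsto_lowerbound[OF summable_LIMSEQ[OF assms(1)]])
  show "\<forall>\<^sub>F n in sequentially. f j \<le> (\<Sum>i<n. f i)"
    using eventually_gt_at_top[of j]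
  proof eventually_elim
    case (elim n)
    hence "(\<Sum>i\<in>{j}. f i) \<le> (\<Sum>i<n. f i)" using assms(2) by (intro sum_mono2) auto
    thus ?case by simp
  qed
qed simp

section \<open>Decreasing sequences below an element with \<open>{u}\<close> an Lwc-set\<close>

lemma Lwc_singleton_disjoint_tendsto:
  assumes "Lwc_set {u}" "\<And>n. 0 \<le> e n" "\<And>n. e n \<le> u" "\<And>n m. n \<noteq> m \<Longrightarrow> inf (e n) (e m) = 0"
  shows "(\<lambda>n. norm (e n)) \<longlonglongrightarrow> 0"
proof -
  have "0 \<le> u" using assms(2,3) order.trans by blast
  hence "e n \<in> sol {u}" for n using assms(2,3) by (simp add: sol_def lat_abs_eq_self)
  moreover have "disjoint_seq e" using assms(2,4) by (simp add: disjoint_seq_def lat_abs_eq_self)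
  ultimately show ?thesis using assms(1) unfolding Lwc_set_def by blast
qed

lemma disjointify_almost_disjoint:
  fixes k :: "nat \<Rightarrow> 'a::banach_lattice"
  assumes k: "\<And>i. 0 \<le> k i" and B: "summable B" "\<And>i j. i \<noteq> j \<Longrightarrow> norm (inf (k i) (k j)) \<le> B j"
  obtains e where "\<And>i. 0 \<le> e i" "\<And>i. e i \<le> k i" "\<And>i j. i \<noteq> j \<Longrightarrow> inf (e i) (e j) = 0"
    "\<And>i. norm (k i) \<le> norm (e i) + suminf B"
proof -
  have B0: "0 \<le> B j" for j
    using B(2)[of "Suc j" j] norm_ge_zero[of "inf (k (Suc j)) (k j)"] by linarith
  define F where "F = (\<lambda>i j. if j = i then 0 else inf (k i) (k j))"
  have F: "0 \<le> F i j" "norm (F i j) \<le> B j" for i j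
    using k B(2)[of i j] B0[of j] by (auto simp: F_def)
  have sF: "summable (F i)" for i by (rule summable_comparison_test'[OF B(1)]) (use F in auto)
  define S where "S = (\<lambda>i. suminf (F i))"
  have S: "0 \<le> S i" "norm (S i) \<le> suminf B" for i
    unfolding S_def using suminf_nonneg_lattice[OF sF F(1)] norm_suminf_le[OF F(2) B(1)] by auto
  have S_ge: "inf (k i) (k j) \<le> S i" if "i \<noteq> j" for i j
    using term_le_suminf_lattice[OF sF F(1), of i j] that by (simp add: S_def F_def)
  define e where "e i = pprt (k i - S i)" for i
  show ?thesis
  proof
    show "0 \<le> e i" for i by (simp add: e_def)
    show "e i \<le> k i" for i
    proof -
      have "e i \<le> pprt (k i)" unfolding e_def using S(1)[of i] by (intro pprt_mono) simp
      thus ?thesis using k[of i] by simp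
    qed
    have "e i \<le> pprt (k i - k j)" if "i \<noteq> j" for i j
    proof -
      have "e i \<le> pprt (k i - inf (k i) (k j))"
        unfolding e_def using S_ge[OF that] by (intro pprt_mono diff_left_mono)
      thus ?thesis unfolding diff_inf_eq_pprt by simp
    qed
    thus "inf (e i) (e j) = 0" if "i \<noteq> j" for i j
      using that inf_pprt_pprt_uminus[of "k i - k j"]
      by (intro inf_eq_0_mono[of "e i" "pprt (k i - k j)" "e j" "pprt (k j - k i)"]) (auto simp: e_def)
    show "norm (k i) \<le> norm (e i) + suminf B" for i
    proof -
      have "k i - S i \<le> e i" unfolding e_def pprt_def by simp
      hence "k i \<le> e i + S i" by (simp add: diff_le_eq)
      with k have "norm (k i) \<le> norm (e i) + norm (S i)" by (rule norm_le_add_if_le_add)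
      thus ?thesis using S(2)[of i] by simp
    qed
  qed
qed

lemma Lwc_singleton_almost_disjoint_small:
  assumes u: "Lwc_set {u}" and h: "\<And>k. 0 \<le> h k" "\<And>k. h k \<le> u"
    and lim: "\<And>j. (\<lambda>l. norm (inf (h j) (h l))) \<longlonglongrightarrow> 0" and c: "0 < c"
  shows "\<exists>k. norm (h k) < c"
proof (rule ccontr)
  assume "\<not> ?thesis"
  hence hc: "c \<le> norm (h k)" for k by (simp add: not_less)
  define B where "B = (\<lambda>j::nat. c / 4 * (1 / 2) ^ j)"
  have B: "0 < B j" for j using c by (simp add: B_def)
  have B_antimono: "B j \<le> B i" if "i \<le> j" for i j
    unfolding B_def using c that by (intro mult_left_mono power_decreasing) auto
  have sB: "summable B" unfolding B_def by (intro summable_mult summable_geometric) simp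
  have sum_B: "suminf B = c / 2"
    using suminf_mult[OF summable_geometric[of "1 / 2 :: real"], of "c / 4"]
    by (simp add: B_def suminf_geometric)
  obtain \<sigma> :: "nat \<Rightarrow> nat" where
    \<sigma>: "strict_mono \<sigma>" "\<And>i j. i < j \<Longrightarrow> norm (inf (h (\<sigma> i)) (h (\<sigma> j))) \<le> B j"
    by (rule subseq_eventually_small[of "\<lambda>j l. norm (inf (h j) (h l))" B, OF lim B]) blast
  define k where "k = (\<lambda>i. h (\<sigma> i))"
  have kB: "norm (inf (k i) (k j)) \<le> B j" if "i \<noteq> j" for i j
  proof (cases "i < j")
    case False
    hence "norm (inf (k j) (k i)) \<le> B i" using that \<sigma>(2)[of j i] by (simp add: k_def)
    thus ?thesis using B_antimono[of j i] False by (simp add: inf_commute)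
  qed (use \<sigma>(2) k_def in simp)
  obtain e where e: "\<And>i. 0 \<le> e i" "\<And>i. e i \<le> k i"
    "\<And>i j. i \<noteq> j \<Longrightarrow> inf (e i) (e j) = 0" "\<And>i. norm (k i) \<le> norm (e i) + suminf B"
    by (rule disjointify_almost_disjoint[of k B]) (use h(1) sB kB in \<open>auto simp: k_def\<close>)
  have eu: "e i \<le> u" for i using e(2)[of i] h(2)[of "\<sigma> i"] by (simp add: k_def)
  have "(\<lambda>i. norm (e i)) \<longlonglongrightarrow> 0"
    using e(1) eu e(3) by (rule Lwc_singleton_disjoint_tendsto[OF u])
  moreover have "c / 2 \<le> norm (e i)" for i
    using e(4)[of i] hc[of "\<sigma> i"] sum_B by (simp add: k_def)
  hence "\<forall>\<^sub>F i in sequentially. c / 2 \<le> norm (e i)" by simp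
  ultimately have "c / 2 \<le> 0" by (rule tendsto_lowerbound) simp
  thus False using c by simp
qed

definition nwise_disjoint :: "nat \<Rightarrow> (nat \<Rightarrow> 'a::{zero, order}) \<Rightarrow> bool" where
  "nwise_disjoint n h \<longleftrightarrow> (\<forall>I z. card I = n \<and> 0 \<le> z \<and> (\<forall>i\<in>I. z \<le> h i) \<longrightarrow> z = 0)"

lemma nwise_disjoint_inf:
  fixes h :: "nat \<Rightarrow> 'a::{zero, lattice}"
  assumes h: "nwise_disjoint (Suc (Suc n)) h" and \<tau>: "inj \<tau>" "j \<notin> range \<tau>"
  shows "nwise_disjoint (Suc n) (\<lambda>l. inf (h j) (h (\<tau> l)))"
  unfolding nwise_disjoint_def
proof (intro allI impI, elim conjE)
  fix I z assume I: "card I = Suc n" and z: "0 \<le> z" "\<forall>i\<in>I. z \<le> inf (h j) (h (\<tau> i))"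
  have "finite I" "I \<noteq> {}" using I by (simp_all add: card_ge_0_finite) auto
  have "card (\<tau> ` I) = card I" using inj_on_subset[OF \<tau>(1)] by (simp add: card_image)
  moreover have "j \<notin> \<tau> ` I" using \<tau>(2) by auto
  ultimately have "card (insert j (\<tau> ` I)) = Suc (Suc n)" using \<open>finite I\<close> I by simp
  moreover have "\<forall>i\<in>insert j (\<tau> ` I). z \<le> h i" using z(2) \<open>I \<noteq> {}\<close> by auto
  ultimately show "z = 0"
    using h[unfolded nwise_disjoint_def, rule_format, of "insert j (\<tau> ` I)" z] z(1) by blast
qed

text \<open>Induction on the order of disjointness: either \<open>h\<close> is almost disjoint, or the meets of a
  fixed term \<open>h j\<close> with a subsequence form a sequence of lower order that is still bounded
  away from \<open>0\<close>.\<close>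
lemma Lwc_singleton_nwise_disjoint_small:
  assumes u: "Lwc_set {u}"
  shows "(\<And>k. 0 \<le> h k) \<Longrightarrow> (\<And>k. h k \<le> u) \<Longrightarrow> nwise_disjoint (Suc n) h \<Longrightarrow> 0 < c \<Longrightarrow>
    \<exists>k. norm (h k) < c"
proof (induction n arbitrary: h c)
  case 0
  have "\<forall>I z. card I = Suc 0 \<and> 0 \<le> z \<and> (\<forall>i\<in>I. z \<le> h i) \<longrightarrow> z = 0"
    using 0(3) unfolding nwise_disjoint_def .
  from this[rule_format, of "{0}" "h 0"] have "h 0 = 0" using 0(1) by simp
  thus ?case using 0(4) by (intro exI[of _ 0]) simp
next
  case (Suc n)
  show ?case
  proof (cases "\<forall>j. (\<lambda>l. norm (inf (h j) (h l))) \<longlonglongrightarrow> 0")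
    case True
    show ?thesis
      by (rule Lwc_singleton_almost_disjoint_small[OF u Suc.prems(1,2) _ Suc.prems(4)]) (use True in blast)
  next
    case False
    then obtain j where "\<not> (\<lambda>l. norm (inf (h j) (h l))) \<longlonglongrightarrow> 0" by blast
    then obtain r and \<sigma> :: "nat \<Rightarrow> nat"
      where r: "0 < r" "strict_mono \<sigma>" "\<And>l. r \<le> \<bar>norm (inf (h j) (h (\<sigma> l)))\<bar>"
      by (rule not_tendsto_0_subseq) blast
    define \<tau> where "\<tau> = (\<lambda>l. \<sigma> (l + Suc j))"
    have "strict_mono \<tau>" using r(2) by (simp add: \<tau>_def strict_mono_def)
    hence "inj \<tau>" by (rule strict_mono_imp_inj_on)
    have "j < \<tau> l" for l using seq_suble[OF r(2), of "l + Suc j"] by (simp add: \<tau>_def)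
    hence "j \<notin> range \<tau>" by (auto simp: less_irrefl)
    define w where "w = (\<lambda>l. inf (h j) (h (\<tau> l)))"
    have "\<exists>l. norm (w l) < r"
    proof (rule Suc.IH)
      show "0 \<le> w l" "w l \<le> u" for l
        using Suc.prems(1,2) by (auto simp: w_def intro: le_infI1)
      show "nwise_disjoint (Suc n) w"
        unfolding w_def by (rule nwise_disjoint_inf) fact+
    qed (rule r(1))
    then obtain l where "norm (w l) < r" by blast
    moreover have "r \<le> norm (w l)" using r(3) by (simp add: w_def \<tau>_def)
    ultimately show ?thesis by simp
  qed
qed

lemma nwise_disjoint_pprt_diff_scaleR:
  fixes g :: "nat \<Rightarrow> 'a::{ordered_real_vector, lattice_ab_group_add}"
  assumes g: "\<And>k. 0 \<le> g k" "\<And>I. finite I \<Longrightarrow> (\<Sum>i\<in>I. g i) \<le> u"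
    and u: "0 \<le> u" and n: "1 \<le> real n * \<delta>"
  shows "nwise_disjoint n (\<lambda>k. pprt (g k - \<delta> *\<^sub>R u))"
  unfolding nwise_disjoint_def
proof (intro allI impI, elim conjE)
  fix I z assume I: "card I = n" and z: "0 \<le> z" "\<forall>i\<in>I. z \<le> pprt (g i - \<delta> *\<^sub>R u)"
  define a where "a = (\<lambda>i. g i - \<delta> *\<^sub>R u)"
  have "n \<noteq> 0" using n by (cases n) auto
  hence fI: "finite I" using I by (meson card.infinite)
  have "(\<Sum>i\<in>I. pprt (a i)) - (\<Sum>i\<in>I. pprt (- a i)) = (\<Sum>i\<in>I. a i)"
    by (simp only: sum_subtractf[symmetric] pprt_diff_pprt_uminus)
  also have "\<dots> = (\<Sum>i\<in>I. g i) - (real n * \<delta>) *\<^sub>R u"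
    using I by (simp add: a_def sum_subtractf sum_constant_scaleR)
  also have "\<dots> \<le> u - (real n * \<delta>) *\<^sub>R u" by (rule diff_right_mono[OF g(2)[OF fI]])
  also have "\<dots> \<le> 0" using scaleR_right_mono[OF n u] by simp
  finally have "(\<Sum>i\<in>I. pprt (a i)) \<le> (\<Sum>i\<in>I. pprt (- a i))" by simp
  moreover have "real n *\<^sub>R z \<le> (\<Sum>i\<in>I. pprt (a i))"
    using I z(2) sum_mono[of I "\<lambda>_. z" "\<lambda>i. pprt (a i)"] by (simp add: a_def sum_constant_scaleR)
  ultimately have le: "real n *\<^sub>R z \<le> (\<Sum>i\<in>I. pprt (- a i))" by (rule order.trans[rotated])
  have "inf z (pprt (- a i)) = 0" if "i \<in> I" for i
    using z that inf_pprt_pprt_uminus[of "a i"]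
    by (intro inf_eq_0_mono[of z "pprt (a i)" "pprt (- a i)" "pprt (- a i)"]) (auto simp: a_def)
  hence "inf z (\<Sum>i\<in>I. pprt (- a i)) = 0" using fI z(1) by (intro inf_sum_eq_0) auto
  hence "inf (real n *\<^sub>R z) (1 *\<^sub>R (\<Sum>i\<in>I. pprt (- a i))) = 0"
    using z(1) by (intro inf_scaleR_eq_0) (auto intro: sum_nonneg)
  hence "real n *\<^sub>R z = 0" using le by (simp add: inf_absorb1)
  thus "z = 0" using \<open>n \<noteq> 0\<close> by simp
qed

lemma Lwc_singleton_bounded_sums_small:
  fixes g :: "nat \<Rightarrow> 'a::banach_lattice"
  assumes u: "Lwc_set {u}" and g: "\<And>k. 0 \<le> g k" "\<And>n. (\<Sum>k<n. g k) \<le> u" and \<epsilon>: "0 < \<epsilon>"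
  shows "\<exists>k. norm (g k) < \<epsilon>"
proof (rule ccontr)
  assume "\<not> ?thesis"
  hence g\<epsilon>: "\<epsilon> \<le> norm (g k)" for k by (simp add: not_less)
  have u0: "0 \<le> u" using g(2)[of 0] by simp
  have sums: "(\<Sum>i\<in>I. g i) \<le> u" if "finite I" for I
    using g that by (rule sum_le_if_lessThan_sums_le)
  define \<delta> where "\<delta> = \<epsilon> / (2 * (norm u + 1))"
  have \<delta>0: "0 < \<delta>"
    unfolding \<delta>_def using \<epsilon> by (intro divide_pos_pos mult_pos_pos) (auto intro: add_nonneg_pos)
  have "\<delta> * norm u = \<epsilon> / 2 * (norm u / (norm u + 1))" by (simp add: \<delta>_def field_simps)
  also have "\<dots> \<le> \<epsilon> / 2" using \<epsilon> by (intro mult_left_le) (simp_all add: add_nonneg_pos)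
  finally have \<delta>: "0 < \<delta>" "\<delta> * norm u \<le> \<epsilon> / 2" using \<delta>0 by simp_all
  define N where "N = nat \<lceil>1 / \<delta>\<rceil>"
  have "1 / \<delta> \<le> real N" unfolding N_def by (rule real_nat_ceiling_ge)
  hence "1 \<le> real N * \<delta>" using \<delta>(1) by (simp add: field_simps)
  hence N: "1 \<le> real (Suc N) * \<delta>" using \<delta>(1) by (simp add: distrib_right)
  define h where "h = (\<lambda>k. pprt (g k - \<delta> *\<^sub>R u))"
  have "\<exists>k. norm (h k) < \<epsilon> / 2"
  proof (rule Lwc_singleton_nwise_disjoint_small[OF u])
    show "0 \<le> h k" for k by (simp add: h_def)
    show "h k \<le> u" for k
    proof -
      have "h k \<le> pprt (g k)" unfolding h_def using \<delta>(1) u0 by (intro pprt_mono) (simp add: scaleR_nonneg_nonneg)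
      thus ?thesis using g(1)[of k] sums[of "{k}"] by simp
    qed
    show "nwise_disjoint (Suc N) h"
      unfolding h_def by (rule nwise_disjoint_pprt_diff_scaleR) (use g(1) sums u0 N in auto)
  qed (use \<epsilon> in simp)
  moreover have "\<epsilon> / 2 \<le> norm (h k)" for k
  proof -
    have "g k - \<delta> *\<^sub>R u \<le> h k" by (simp add: h_def pprt_def)
    hence "norm (g k) \<le> norm (h k) + norm (\<delta> *\<^sub>R u)"
      using g(1) by (intro norm_le_add_if_le_add) (simp_all add: diff_le_eq)
    thus ?thesis using g\<epsilon>[of k] \<delta> by simp
  qed
  ultimately show False by (simp add: not_less[symmetric])
qed

lemma Lwc_singleton_decseq_Cauchy:
  assumes u: "Lwc_set {u}" and P: "\<And>n. 0 \<le> P n" "\<And>n. P n \<le> u" "decseq P"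
  shows "Cauchy P"
proof (rule ccontr)
  assume "\<not> Cauchy P"
  then obtain e where e: "0 < e" "\<And>M. \<exists>n>M. e \<le> dist (P M) (P n)"
    by (rule not_Cauchy_imp_far_later) blast
  have "\<exists>s. \<forall>k. True \<and> s k < s (Suc k) \<and> e \<le> norm (P (s k) - P (s (Suc k)))"
    by (rule dependent_nat_choice) (use e(2) in \<open>auto simp: dist_norm\<close>)
  then obtain s :: "nat \<Rightarrow> nat" where s: "\<And>k. s k < s (Suc k)"
    "\<And>k. e \<le> norm (P (s k) - P (s (Suc k)))" by blast
  define g where "g = (\<lambda>k. P (s k) - P (s (Suc k)))"
  have "\<exists>k. norm (g k) < e"
  proof (rule Lwc_singleton_bounded_sums_small[OF u])
    show "0 \<le> g k" for k
      using decseqD[OF P(3), of "s k" "s (Suc k)"] s(1)[of k] by (simp add: g_def)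
    show "(\<Sum>k<n. g k) \<le> u" for n
    proof -
      have "(\<Sum>k<n. g k) = P (s 0) - P (s n)"
        using sum_lessThan_telescope'[of "\<lambda>k. P (s k)" n] by (simp add: g_def)
      also have "\<dots> \<le> P (s 0)" using P(1)[of "s n"] by simp
      also have "\<dots> \<le> u" by (rule P(2))
      finally show ?thesis .
    qed
  qed (use e in simp)
  then obtain k where "norm (g k) < e" by blast
  thus False using s(2)[of k] by (simp add: g_def)
qed

section \<open>Disjoint functionals are null on \<open>u\<close> when \<open>{u}\<close> is an Lwc-set\<close>

lemma dual_abs_diff_pprt_le:
  assumes "0 \<le> z" "0 \<le> u"
  shows "dual_abs f (u - pprt (u - 2 *\<^sub>R z)) \<le> 2 * dual_abs f z"
proof -
  have "u - pprt (u - 2 *\<^sub>R z) = inf (2 *\<^sub>R z) u"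
    unfolding pprt_def diff_sup_eq_inf by (simp add: add_inf_distrib_left)
  hence "dual_abs f (u - pprt (u - 2 *\<^sub>R z)) \<le> dual_abs f (z + z)"
    using assms by (intro dual_abs_mono) (auto simp: scaleR_2 intro: le_infI1)
  also have "\<dots> \<le> 2 * dual_abs f z" using assms(1) dual_abs_add_le[of z z f] by simp
  finally show ?thesis .
qed

lemma dual_disjoint_separation:
  assumes fg: "dual_disjoint f g" and u: "0 \<le> u" and d: "0 < d"
  obtains a b where "0 \<le> a" "a \<le> u" "0 \<le> b" "b \<le> u" "inf a b = 0"
    "dual_abs f (u - a) \<le> 2 * d" "dual_abs g (u - b) \<le> 2 * d"
proof -
  obtain z where z: "0 \<le> z" "z \<le> u" "dual_abs f z + dual_abs g (u - z) < d"
    using dual_disjointE[OF fg u d] by blast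
  have small: "dual_abs f z \<le> d" "dual_abs g (u - z) \<le> d"
    using z dual_abs_nonneg[OF z(1), of f] dual_abs_nonneg[of "u - z" g] by simp_all
  have below: "pprt (u - 2 *\<^sub>R w) \<le> u" if "0 \<le> w" for w
    using pprt_mono[of "u - 2 *\<^sub>R w" u] that u by (simp add: scaleR_nonneg_nonneg)
  have flip: "u - 2 *\<^sub>R (u - z) = - (u - 2 *\<^sub>R z)" by (simp add: algebra_simps scaleR_2)
  show ?thesis
  proof (rule that)
    show "pprt (u - 2 *\<^sub>R z) \<le> u" "pprt (u - 2 *\<^sub>R (u - z)) \<le> u"
      using below z by simp_all
    show "inf (pprt (u - 2 *\<^sub>R z)) (pprt (u - 2 *\<^sub>R (u - z))) = 0"
      unfolding flip by (rule inf_pprt_pprt_uminus)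
    show "dual_abs f (u - pprt (u - 2 *\<^sub>R z)) \<le> 2 * d"
      using dual_abs_diff_pprt_le[of z u f] z u small by simp
    show "dual_abs g (u - pprt (u - 2 *\<^sub>R (u - z))) \<le> 2 * d"
      using dual_abs_diff_pprt_le[of "u - z" u g] z u small by simp
  qed simp_all
qed

primrec row_meet :: "(nat \<Rightarrow> nat \<Rightarrow> 'a::lattice) \<Rightarrow> 'a \<Rightarrow> nat \<Rightarrow> nat \<Rightarrow> 'a" where
  "row_meet A u n 0 = u"
| "row_meet A u n (Suc K) = (if K = n then row_meet A u n K else inf (row_meet A u n K) (A n K))"

lemma decseq_row_meet: "decseq (row_meet A u n)"
  by (rule decseq_SucI) simp

lemma row_meet_le: "row_meet A u n K \<le> u"
  using decseqD[OF decseq_row_meet, of 0 K] by simp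

lemma row_meet_nonneg:
  fixes A :: "nat \<Rightarrow> nat \<Rightarrow> 'a::{zero, lattice}"
  shows "0 \<le> u \<Longrightarrow> (\<And>m. 0 \<le> A n m) \<Longrightarrow> 0 \<le> row_meet A u n K"
  by (induction K) auto

lemma row_meet_le_entry: "m < K \<Longrightarrow> m \<noteq> n \<Longrightarrow> row_meet A u n K \<le> A n m"
proof (induction K)
  case (Suc K)
  thus ?case by (cases "m = K") (auto intro: le_infI1)
qed simp

lemma diff_row_meet_le_sum:
  fixes A :: "nat \<Rightarrow> nat \<Rightarrow> 'a::lattice_ab_group_add"
  assumes "\<And>m. A n m \<le> u"
  shows "u - row_meet A u n K \<le> (\<Sum>m\<in>{..<K} - {n}. u - A n m)"
proof (induction K)
  case (Suc K)
  show ?case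
  proof (cases "K = n")
    case False
    have "u - row_meet A u n (Suc K) = sup (u - row_meet A u n K) (u - A n K)"
      using False by (simp add: diff_inf_eq_sup add_sup_distrib_left)
    also have "\<dots> \<le> (u - row_meet A u n K) + (u - A n K)"
      using assms row_meet_le[of A u n K] by (intro sup_le_add_nonneg) simp_all
    also have "\<dots> \<le> (\<Sum>m\<in>{..<K} - {n}. u - A n m) + (u - A n K)"
      using Suc.IH by (rule add_right_mono)
    also have "\<dots> = (\<Sum>m\<in>{..<Suc K} - {n}. u - A n m)"
      using False by (simp add: lessThan_Suc insert_Diff_if add.commute)
    finally show ?thesis .
  qed (use Suc.IH in \<open>simp add: lessThan_Suc\<close>)
qed simp

lemma Lwc_singleton_row_meet_limits:
  fixes A :: "nat \<Rightarrow> nat \<Rightarrow> 'a::banach_lattice"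
  assumes u: "Lwc_set {u}" "0 \<le> u"
    and A: "\<And>n m. 0 \<le> A n m" "\<And>n m. n \<noteq> m \<Longrightarrow> inf (A n m) (A m n) = 0"
  obtains y where "\<And>n. 0 \<le> y n" "\<And>n. y n \<le> u" "\<And>n m. n \<noteq> m \<Longrightarrow> inf (y n) (y m) = 0"
    "\<And>n. row_meet A u n \<longlonglongrightarrow> y n" "\<And>n K. y n \<le> row_meet A u n K"
proof -
  have Y: "0 \<le> row_meet A u n K" for n K using u(2) A(1) by (rule row_meet_nonneg)
  have "Cauchy (row_meet A u n)" for n
    using u(1) Y row_meet_le decseq_row_meet by (rule Lwc_singleton_decseq_Cauchy)
  hence y: "row_meet A u n \<longlonglongrightarrow> lim (row_meet A u n)" for n
    by (simp add: Cauchy_convergent_iff convergent_LIMSEQ_iff)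
  have y_le: "lim (row_meet A u n) \<le> row_meet A u n K" for n K
  proof (rule lattice_tendsto_upperbound[OF y])
    show "\<forall>\<^sub>F K' in sequentially. row_meet A u n K' \<le> row_meet A u n K"
      using eventually_ge_at_top[of K] by eventually_elim (rule decseqD[OF decseq_row_meet])
  qed simp
  have y_le_entry: "lim (row_meet A u n) \<le> A n m" if "n \<noteq> m" for n m
  proof -
    have "row_meet A u n (Suc (max n m)) \<le> A n m" using that by (intro row_meet_le_entry) auto
    with y_le show ?thesis by (rule order.trans)
  qed
  show ?thesis
  proof (rule that)
    show "0 \<le> lim (row_meet A u n)" for n
      by (rule lattice_tendsto_lowerbound[OF y]) (simp_all add: Y)
    show "lim (row_meet A u n) \<le> u" for n using y_le[of n 0] by simp
    show "inf (lim (row_meet A u n)) (lim (row_meet A u m)) = 0" if "n \<noteq> m" for n m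
      using that y_le_entry[of n m] y_le_entry[of m n]
      by (intro inf_eq_0_mono[OF _ _ _ _ A(2)[OF that]]) (auto intro: lattice_tendsto_lowerbound[OF y] simp: Y)
  qed (use y y_le in auto)
qed

lemma dual_disjoint_separating_family:
  fixes g :: "nat \<Rightarrow> 'a::banach_lattice \<Rightarrow>\<^sub>L real"
  assumes g: "\<And>n m. n \<noteq> m \<Longrightarrow> dual_disjoint (g n) (g m)" and u: "0 \<le> u" and B: "\<And>m. 0 < B m"
  obtains A where "\<And>n m. 0 \<le> A n m" "\<And>n m. A n m \<le> u" "\<And>n m. n \<noteq> m \<Longrightarrow> inf (A n m) (A m n) = 0"
    "\<And>n m. n \<noteq> m \<Longrightarrow> dual_abs (g n) (u - A n m) \<le> 2 * B (max n m)"
proof -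
  define Q where "Q n m p \<longleftrightarrow> 0 \<le> fst p \<and> fst p \<le> u \<and> 0 \<le> snd p \<and> snd p \<le> u
    \<and> inf (fst p) (snd p) = 0 \<and> dual_abs (g n) (u - fst p) \<le> 2 * B m
    \<and> dual_abs (g m) (u - snd p) \<le> 2 * B m" for n m p
  define p where "p n m = (SOME p. Q n m p)" for n m
  have "Q n m (p n m)" if "n < m" for n m
    unfolding p_def
  proof (rule someI_ex)
    have "dual_disjoint (g n) (g m)" using that by (intro g) simp
    then obtain a b where "0 \<le> a" "a \<le> u" "0 \<le> b" "b \<le> u" "inf a b = 0"
      "dual_abs (g n) (u - a) \<le> 2 * B m" "dual_abs (g m) (u - b) \<le> 2 * B m"
      using dual_disjoint_separation[OF _ u B[of m]] by blast
    hence "Q n m (a, b)" by (simp add: Q_def)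
    thus "\<exists>p. Q n m p" ..
  qed
  hence p: "0 \<le> fst (p n m)" "fst (p n m) \<le> u" "0 \<le> snd (p n m)" "snd (p n m) \<le> u"
    "inf (fst (p n m)) (snd (p n m)) = 0" "dual_abs (g n) (u - fst (p n m)) \<le> 2 * B m"
    "dual_abs (g m) (u - snd (p n m)) \<le> 2 * B m" if "n < m" for n m
    using that unfolding Q_def by blast+
  define A where "A n m = (if n = m then u else if n < m then fst (p n m) else snd (p m n))" for n m
  show ?thesis
  proof (rule that)
    show "0 \<le> A n m" for n m
      using p(1)[of n m] p(3)[of m n] u by (cases n m rule: linorder_cases) (simp_all add: A_def)
    show "A n m \<le> u" for n m
      using p(2)[of n m] p(4)[of m n] by (cases n m rule: linorder_cases) (simp_all add: A_def)
    show "inf (A n m) (A m n) = 0" if "n \<noteq> m" for n m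
      using p(5)[of n m] p(5)[of m n] that
      by (cases n m rule: linorder_cases) (simp_all add: A_def inf_commute)
    show "dual_abs (g n) (u - A n m) \<le> 2 * B (max n m)" if "n \<noteq> m" for n m
      using p(6)[of n m] p(7)[of m n] that by (cases n m rule: linorder_cases) (simp_all add: A_def)
  qed
qed

lemma dual_abs_row_meet_ge:
  assumes "0 \<le> u" "\<And>m. 0 \<le> A n m" "\<And>m. A n m \<le> u"
  shows "dual_abs f u - (\<Sum>m\<in>{..<K} - {n}. dual_abs f (u - A n m)) \<le> dual_abs f (row_meet A u n K)"
proof -
  have rm: "0 \<le> row_meet A u n K" "row_meet A u n K \<le> u"
    using row_meet_nonneg[of u A n K] row_meet_le[of A u n K] assms by simp_all
  have "dual_abs f u \<le> dual_abs f (row_meet A u n K) + dual_abs f (u - row_meet A u n K)"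
    using dual_abs_add_le[of "row_meet A u n K" "u - row_meet A u n K" f] rm by simp
  also have "dual_abs f (u - row_meet A u n K) \<le> dual_abs f (\<Sum>m\<in>{..<K} - {n}. u - A n m)"
    using rm assms(3) by (intro dual_abs_mono diff_row_meet_le_sum) simp_all
  also have "\<dots> \<le> (\<Sum>m\<in>{..<K} - {n}. dual_abs f (u - A n m))"
    using assms(3) by (intro dual_abs_sum_le) simp
  finally show ?thesis by simp
qed

lemma dual_abs_tendsto_lowerbound:
  assumes "X \<longlonglongrightarrow> y" "\<And>K. 0 \<le> X K" "\<And>K. c \<le> dual_abs f (X K)"
  shows "c \<le> dual_abs f y"
proof -
  have y: "0 \<le> y" by (rule lattice_tendsto_lowerbound[OF assms(1)]) (simp_all add: assms(2))
  have "(\<lambda>K. dual_abs f y + norm f * norm (X K - y)) \<longlonglongrightarrow> dual_abs f y + norm f * 0"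
    using assms(1) by (intro tendsto_intros) (simp add: LIM_zero tendsto_norm_zero)
  moreover have "\<forall>\<^sub>F K in sequentially. c \<le> dual_abs f y + norm f * norm (X K - y)"
    using assms(3) dual_abs_le_add_norm_diff[OF assms(2) y, of f] order.trans
    by (intro always_eventually allI) blast
  ultimately have "c \<le> dual_abs f y + norm f * 0" by (rule tendsto_lowerbound) simp
  thus ?thesis by simp
qed

lemma Lwc_singleton_dual_disjoint_approximants:
  fixes g :: "nat \<Rightarrow> 'a::banach_lattice \<Rightarrow>\<^sub>L real"
  assumes u: "Lwc_set {u}" "0 \<le> u" and g: "\<And>n m. n \<noteq> m \<Longrightarrow> dual_disjoint (g n) (g m)"
    and \<eta>: "0 < \<eta>"
  obtains y where "\<And>n. 0 \<le> y n" "\<And>n. y n \<le> u" "\<And>n m. n \<noteq> m \<Longrightarrow> inf (y n) (y m) = 0"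
    "\<And>n. dual_abs (g n) u - \<eta> \<le> dual_abs (g n) (y n)"
proof -
  define B where "B = (\<lambda>m::nat. \<eta> / 4 * (1 / 2) ^ m)"
  have B: "0 < B m" for m using \<eta> by (simp add: B_def)
  have B_antimono: "B (max n m) \<le> B m" for n m
    unfolding B_def using \<eta> by (intro mult_left_mono power_decreasing) auto
  have sum_B: "(\<Sum>m\<in>M. 2 * B m) \<le> \<eta>" if "finite M" for M
  proof -
    have "(\<Sum>m\<in>M. 2 * B m) = \<eta> / 2 * (\<Sum>m\<in>M. (1 / 2 :: real) ^ m)"
      by (simp add: B_def sum_distrib_left)
    also have "\<dots> \<le> \<eta> / 2 * 2" using sum_power_half_le[OF that] \<eta> by (intro mult_left_mono) auto
    finally show ?thesis by simp
  qed
  obtain A where A: "\<And>n m. 0 \<le> A n m" "\<And>n m. A n m \<le> u" "\<And>n m. n \<noteq> m \<Longrightarrow> inf (A n m) (A m n) = 0"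
    "\<And>n m. n \<noteq> m \<Longrightarrow> dual_abs (g n) (u - A n m) \<le> 2 * B (max n m)"
    using g u(2) B by (rule dual_disjoint_separating_family[of g u B]) (assumption | rule that)+
  obtain y where y: "\<And>n. 0 \<le> y n" "\<And>n. y n \<le> u" "\<And>n m. n \<noteq> m \<Longrightarrow> inf (y n) (y m) = 0"
    "\<And>n. row_meet A u n \<longlonglongrightarrow> y n" "\<And>n K. y n \<le> row_meet A u n K"
    using u A(1) A(3) by (rule Lwc_singleton_row_meet_limits[of u A]) (assumption | rule that)+
  show ?thesis
  proof (rule that[OF y(1-3)])
    fix n
    have bound: "dual_abs (g n) u - \<eta> \<le> dual_abs (g n) (row_meet A u n K)" for K
    proof -
      have "dual_abs (g n) (u - A n m) \<le> 2 * B m" if "m \<in> {..<K} - {n}" for m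
      proof -
        have "n \<noteq> m" using that by auto
        from A(4)[OF this] B_antimono[of n m] show ?thesis by linarith
      qed
      hence "(\<Sum>m\<in>{..<K} - {n}. dual_abs (g n) (u - A n m)) \<le> (\<Sum>m\<in>{..<K} - {n}. 2 * B m)"
        by (rule sum_mono)
      also have "\<dots> \<le> \<eta>" by (rule sum_B) simp
      finally show ?thesis using dual_abs_row_meet_ge[of u A n "g n" K, OF u(2) A(1) A(2)] by linarith
    qed
    show "dual_abs (g n) u - \<eta> \<le> dual_abs (g n) (y n)"
      by (rule dual_abs_tendsto_lowerbound[OF y(4)]) (use row_meet_nonneg[OF u(2) A(1)] bound in auto)
  qed
qed

lemma Lwc_singleton_dual_disjoint_tendsto:
  fixes f :: "nat \<Rightarrow> 'a::banach_lattice \<Rightarrow>\<^sub>L real"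
  assumes u: "Lwc_set {u}" "0 \<le> u"
    and f: "bounded (range f)" "\<And>n m. n \<noteq> m \<Longrightarrow> dual_disjoint (f n) (f m)"
  shows "(\<lambda>n. dual_abs (f n) u) \<longlonglongrightarrow> 0"
proof (rule ccontr)
  assume "\<not> ?thesis"
  then obtain r and \<sigma> :: "nat \<Rightarrow> nat"
    where r: "0 < r" "strict_mono \<sigma>" "\<And>n. r \<le> \<bar>dual_abs (f (\<sigma> n)) u\<bar>"
    by (rule not_tendsto_0_subseq) blast
  obtain M where M: "\<And>n. norm (f n) \<le> M" using f(1) by (auto simp: bounded_iff)
  have M0: "0 \<le> M" using M[of 0] norm_ge_zero[of "f 0"] by linarith
  have f\<sigma>: "dual_disjoint (f (\<sigma> n)) (f (\<sigma> m))" if "n \<noteq> m" for n m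
    using that by (intro f(2)) (simp add: strict_mono_eq[OF r(2)])
  have "0 < r / 2" using r(1) by simp
  with u f\<sigma> obtain y where y: "\<And>n. 0 \<le> y n" "\<And>n. y n \<le> u" "\<And>n m. n \<noteq> m \<Longrightarrow> inf (y n) (y m) = 0"
    "\<And>n. dual_abs (f (\<sigma> n)) u - r / 2 \<le> dual_abs (f (\<sigma> n)) (y n)"
    by (rule Lwc_singleton_dual_disjoint_approximants[of u "\<lambda>n. f (\<sigma> n)" "r / 2"])
      (assumption | rule that)+
  have "(\<lambda>n. norm (y n)) \<longlonglongrightarrow> 0" using y(1-3) by (rule Lwc_singleton_disjoint_tendsto[OF u(1)])
  moreover have "r / 2 \<le> (M + 1) * norm (y n)" for n
  proof -
    have "r / 2 \<le> dual_abs (f (\<sigma> n)) (y n)"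
      using r(3)[of n] y(4)[of n] dual_abs_nonneg[OF u(2), of "f (\<sigma> n)"] by simp
    also have "\<dots> \<le> norm (f (\<sigma> n)) * norm (y n)" using y(1) by (rule dual_abs_le_norm)
    also have "\<dots> \<le> (M + 1) * norm (y n)" using M[of "\<sigma> n"] by (intro mult_right_mono) auto
    finally show ?thesis .
  qed
  hence "\<forall>\<^sub>F n in sequentially. r / (2 * (M + 1)) \<le> norm (y n)"
    using M0 by (simp add: field_simps)
  ultimately have "r / (2 * (M + 1)) \<le> 0" by (rule tendsto_lowerbound) simp
  thus False using r(1) M0 by (simp add: field_simps)
qed

section \<open>The Hahn--Banach extension theorem\<close>

text \<open>A set \<open>G \<subseteq> V \<times> \<real>\<close> with \<open>dominated_graph p G\<close> is the graph of a linear functional on a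
  subspace of \<open>V\<close> that is bounded above by \<open>p\<close>.\<close>
definition dominated_graph :: "('v::real_vector \<Rightarrow> real) \<Rightarrow> ('v \<times> real) set \<Rightarrow> bool" where
  "dominated_graph p G \<longleftrightarrow> (0, 0) \<in> G
     \<and> (\<forall>x a y b. (x, a) \<in> G \<longrightarrow> (y, b) \<in> G \<longrightarrow> (x + y, a + b) \<in> G)
     \<and> (\<forall>s x a. (x, a) \<in> G \<longrightarrow> (s *\<^sub>R x, s * a) \<in> G)
     \<and> (\<forall>x a b. (x, a) \<in> G \<longrightarrow> (x, b) \<in> G \<longrightarrow> a = b)
     \<and> (\<forall>x a. (x, a) \<in> G \<longrightarrow> a \<le> p x)"

lemma dominated_graphD:
  assumes "dominated_graph p G"
  shows "(0, 0) \<in> G" "(x, a) \<in> G \<Longrightarrow> (y, b) \<in> G \<Longrightarrow> (x + y, a + b) \<in> G"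
    "(x, a) \<in> G \<Longrightarrow> (s *\<^sub>R x, s * a) \<in> G" "(x, a) \<in> G \<Longrightarrow> (x, b) \<in> G \<Longrightarrow> a = b"
    "(x, a) \<in> G \<Longrightarrow> a \<le> p x"
  using assms unfolding dominated_graph_def by blast+

lemma dominated_graph_Union_chain:
  assumes "C \<noteq> {}" and G: "\<And>G. G \<in> C \<Longrightarrow> dominated_graph p G"
    and chain: "\<And>X Y. X \<in> C \<Longrightarrow> Y \<in> C \<Longrightarrow> X \<subseteq> Y \<or> Y \<subseteq> X"
  shows "dominated_graph p (\<Union>C)"
proof -
  have two: "\<exists>G\<in>C. (x, a) \<in> G \<and> (y, b) \<in> G" if xy: "(x, a) \<in> \<Union>C" "(y, b) \<in> \<Union>C" for x a y b
  proof -
    obtain X Y where "X \<in> C" "(x, a) \<in> X" "Y \<in> C" "(y, b) \<in> Y" using xy by blast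
    thus ?thesis using chain[of X Y] by blast
  qed
  obtain G0 where "G0 \<in> C" using assms(1) by blast
  show ?thesis
    unfolding dominated_graph_def
  proof (intro conjI allI impI)
    show "(0, 0) \<in> \<Union>C" using \<open>G0 \<in> C\<close> G dominated_graphD(1) by blast
    show "(x + y, a + b) \<in> \<Union>C" if "(x, a) \<in> \<Union>C" "(y, b) \<in> \<Union>C" for x a y b
      using two[OF that] G dominated_graphD(2) by blast
    show "(s *\<^sub>R x, s * a) \<in> \<Union>C" if "(x, a) \<in> \<Union>C" for s x a
      using that G dominated_graphD(3) by blast
    show "a = b" if "(x, a) \<in> \<Union>C" "(x, b) \<in> \<Union>C" for x a b
      using two[OF that] G dominated_graphD(4) by blast
    show "a \<le> p x" if "(x, a) \<in> \<Union>C" for x a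
      using that G dominated_graphD(5) by blast
  qed
qed

lemma dominated_graph_extension_constant:
  assumes sub: "\<And>x y. p (x + y) \<le> p x + p y" and G: "dominated_graph p G"
  obtains c where "\<And>y b. (y, b) \<in> G \<Longrightarrow> b - p (y - w) \<le> c" "\<And>y b. (y, b) \<in> G \<Longrightarrow> c \<le> p (y + w) - b"
proof
  let ?L = "{b - p (y - w) | y b. (y, b) \<in> G}"
  have L_le: "r \<le> p (y' + w) - b'" if r: "r \<in> ?L" and y': "(y', b') \<in> G" for r y' b'
  proof -
    obtain y b where r: "r = b - p (y - w)" "(y, b) \<in> G" using r by blast
    have "b + b' \<le> p ((y - w) + (y' + w))"
      using dominated_graphD(5)[OF G dominated_graphD(2)[OF G r(2) y']] by simp
    also have "\<dots> \<le> p (y - w) + p (y' + w)" by (rule sub)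
    finally show ?thesis using r(1) by simp
  qed
  show "b - p (y - w) \<le> Sup ?L" if "(y, b) \<in> G" for y b
    using that L_le[OF _ dominated_graphD(1)[OF G]] by (intro cSup_upper bdd_aboveI) auto
  show "Sup ?L \<le> p (y + w) - b" if "(y, b) \<in> G" for y b
    using dominated_graphD(1)[OF G] L_le[OF _ that] by (intro cSup_least) auto
qed

lemma dominated_graph_extension_le:
  assumes hom: "\<And>c x. 0 \<le> c \<Longrightarrow> p (c *\<^sub>R x) = c * p x" and G: "dominated_graph p G"
    and c_ge: "\<And>y b. (y, b) \<in> G \<Longrightarrow> b - p (y - w) \<le> c"
    and c_le: "\<And>y b. (y, b) \<in> G \<Longrightarrow> c \<le> p (y + w) - b"
    and yb: "(y, b) \<in> G"
  shows "b + t * c \<le> p (y + t *\<^sub>R w)"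
proof -
  consider "t = 0" | "t > 0" | "t < 0" by linarith
  thus ?thesis
  proof cases
    case 1 thus ?thesis using dominated_graphD(5)[OF G yb] by simp
  next
    case 2
    have "c \<le> p ((1 / t) *\<^sub>R y + w) - (1 / t) * b" by (rule c_le[OF dominated_graphD(3)[OF G yb]])
    also have "(1 / t) *\<^sub>R y + w = (1 / t) *\<^sub>R (y + t *\<^sub>R w)" using 2 by (simp add: algebra_simps)
    finally have "c \<le> (1 / t) * p (y + t *\<^sub>R w) - (1 / t) * b" using 2 hom by simp
    hence "t * c \<le> t * ((1 / t) * p (y + t *\<^sub>R w) - (1 / t) * b)" using 2 by (intro mult_left_mono) auto
    also have "\<dots> = p (y + t *\<^sub>R w) - b" using 2 by (simp add: field_simps)
    finally show ?thesis by simp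
  next
    case 3
    have "(1 / - t) * b - p ((1 / - t) *\<^sub>R y - w) \<le> c" by (rule c_ge[OF dominated_graphD(3)[OF G yb]])
    moreover have "(1 / - t) *\<^sub>R y - w = (1 / - t) *\<^sub>R (y + t *\<^sub>R w)" using 3 by (simp add: algebra_simps)
    ultimately have "(1 / - t) * b - (1 / - t) * p (y + t *\<^sub>R w) \<le> c"
      using 3 hom[of "1 / - t" "y + t *\<^sub>R w"] by simp
    hence "- t * ((1 / - t) * b - (1 / - t) * p (y + t *\<^sub>R w)) \<le> - t * c"
      using 3 by (intro mult_left_mono) auto
    moreover have "- t * ((1 / - t) * b - (1 / - t) * p (y + t *\<^sub>R w)) = b - p (y + t *\<^sub>R w)"
      using 3 by (simp add: field_simps)
    ultimately show ?thesis by simp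
  qed
qed

lemma dominated_graph_extension_unique:
  assumes G: "dominated_graph p G" and w: "\<And>a. (w, a) \<notin> G"
    and yb: "(y1, b1) \<in> G" "(y2, b2) \<in> G" and eq: "y1 + t1 *\<^sub>R w = y2 + t2 *\<^sub>R w"
  shows "t1 = t2" "y1 = y2"
proof -
  show "t1 = t2"
  proof (rule ccontr)
    assume "t1 \<noteq> t2"
    have "(y2 + (-1) *\<^sub>R y1, b2 + (-1) * b1) \<in> G"
      by (rule dominated_graphD(2)[OF G yb(2) dominated_graphD(3)[OF G yb(1)]])
    from dominated_graphD(3)[OF G this, of "1 / (t1 - t2)"]
    have "((1 / (t1 - t2)) *\<^sub>R (y2 + (-1) *\<^sub>R y1), (1 / (t1 - t2)) * (b2 + (-1) * b1)) \<in> G" .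
    moreover have "(t1 - t2) *\<^sub>R w = y2 + (-1) *\<^sub>R y1" using eq by (simp add: algebra_simps)
    hence "(1 / (t1 - t2)) *\<^sub>R (y2 + (-1) *\<^sub>R y1) = (1 / (t1 - t2)) *\<^sub>R ((t1 - t2) *\<^sub>R w)" by simp
    hence "(1 / (t1 - t2)) *\<^sub>R (y2 + (-1) *\<^sub>R y1) = w" using \<open>t1 \<noteq> t2\<close> by simp
    ultimately show False using w by simp
  qed
  with eq show "y1 = y2" by simp
qed

lemma dominated_graph_extend:
  assumes sub: "\<And>x y. p (x + y) \<le> p x + p y" and hom: "\<And>c x. 0 \<le> c \<Longrightarrow> p (c *\<^sub>R x) = c * p x"
    and G: "dominated_graph p G" and w: "\<And>a. (w, a) \<notin> G"
  obtains c where "dominated_graph p {(y + t *\<^sub>R w, b + t * c) | y b t. (y, b) \<in> G}"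
proof -
  obtain c where c_ge: "\<And>y b. (y, b) \<in> G \<Longrightarrow> b - p (y - w) \<le> c"
    and c_le: "\<And>y b. (y, b) \<in> G \<Longrightarrow> c \<le> p (y + w) - b"
    by (rule dominated_graph_extension_constant[of p G w, OF sub G]) (assumption | rule that)+
  let ?G' = "{(y + t *\<^sub>R w, b + t * c) | y b t. (y, b) \<in> G}"
  have "dominated_graph p ?G'"
    unfolding dominated_graph_def
  proof (intro conjI allI impI)
    show "(0, 0) \<in> ?G'" using dominated_graphD(1)[OF G] by force
    show "(x1 + x2, a1 + a2) \<in> ?G'" if mem: "(x1, a1) \<in> ?G'" "(x2, a2) \<in> ?G'" for x1 a1 x2 a2
    proof -
      obtain y1 b1 t1 y2 b2 t2 where e: "x1 = y1 + t1 *\<^sub>R w" "a1 = b1 + t1 * c" "(y1, b1) \<in> G"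
        "x2 = y2 + t2 *\<^sub>R w" "a2 = b2 + t2 * c" "(y2, b2) \<in> G" using mem by blast
      have "x1 + x2 = (y1 + y2) + (t1 + t2) *\<^sub>R w" "a1 + a2 = (b1 + b2) + (t1 + t2) * c"
        using e by (simp_all add: algebra_simps)
      thus ?thesis using dominated_graphD(2)[OF G e(3) e(6)] by blast
    qed
    show "(s *\<^sub>R x, s * a) \<in> ?G'" if mem: "(x, a) \<in> ?G'" for s x a
    proof -
      obtain y b t where e: "x = y + t *\<^sub>R w" "a = b + t * c" "(y, b) \<in> G" using mem by blast
      have "s *\<^sub>R x = s *\<^sub>R y + (s * t) *\<^sub>R w" "s * a = s * b + (s * t) * c"
        using e by (simp_all add: algebra_simps)
      thus ?thesis using dominated_graphD(3)[OF G e(3)] by blast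
    qed
    show "a1 = a2" if mem: "(x, a1) \<in> ?G'" "(x, a2) \<in> ?G'" for x a1 a2
    proof -
      obtain y1 b1 t1 y2 b2 t2 where e: "x = y1 + t1 *\<^sub>R w" "a1 = b1 + t1 * c" "(y1, b1) \<in> G"
        "x = y2 + t2 *\<^sub>R w" "a2 = b2 + t2 * c" "(y2, b2) \<in> G" using mem by blast
      have "y1 + t1 *\<^sub>R w = y2 + t2 *\<^sub>R w" using e by simp
      note t = dominated_graph_extension_unique[OF G w e(3) e(6) this]
      hence "b1 = b2" using e(3,6) dominated_graphD(4)[OF G] by simp
      thus ?thesis using e t by simp
    qed
    show "a \<le> p x" if mem: "(x, a) \<in> ?G'" for x a
    proof -
      obtain y b t where e: "x = y + t *\<^sub>R w" "a = b + t * c" "(y, b) \<in> G" using mem by blast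
      thus ?thesis using dominated_graph_extension_le[OF hom G c_ge c_le e(3), of t] by simp
    qed
  qed
  thus ?thesis by (rule that)
qed

lemma sublinear_scaleR_ge:
  fixes p :: "'v::real_vector \<Rightarrow> real"
  assumes sub: "\<And>x y. p (x + y) \<le> p x + p y" and hom: "\<And>c x. 0 \<le> c \<Longrightarrow> p (c *\<^sub>R x) = c * p x"
  shows "t * p x \<le> p (t *\<^sub>R x)"
proof (cases "0 \<le> t")
  case False
  have "0 = p (t *\<^sub>R x + (- t) *\<^sub>R x)" using hom[of 0 x] by (simp add: scaleR_left_distrib[symmetric])
  also have "\<dots> \<le> p (t *\<^sub>R x) + p ((- t) *\<^sub>R x)" by (rule sub)
  finally show ?thesis using False hom[of "- t" x] by simp
qed (simp add: hom)

lemma dominated_graph_line: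
  fixes p :: "'v::real_vector \<Rightarrow> real"
  assumes sub: "\<And>x y. p (x + y) \<le> p x + p y" and hom: "\<And>c x. 0 \<le> c \<Longrightarrow> p (c *\<^sub>R x) = c * p x"
  shows "dominated_graph p {(t *\<^sub>R v, t * p v) | t. True}"
  unfolding dominated_graph_def
proof (intro conjI allI impI)
  let ?G = "{(t *\<^sub>R v, t * p v) | t. True}"
  show "(0, 0) \<in> ?G" by (auto intro!: exI[of _ 0])
  show "(x + y, a + b) \<in> ?G" if mem: "(x, a) \<in> ?G" "(y, b) \<in> ?G" for x a y b
  proof -
    obtain t1 t2 where "x = t1 *\<^sub>R v" "a = t1 * p v" "y = t2 *\<^sub>R v" "b = t2 * p v" using mem by blast
    thus ?thesis by (auto intro!: exI[of _ "t1 + t2"] simp: scaleR_left_distrib distrib_right)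
  qed
  show "(s *\<^sub>R x, s * a) \<in> ?G" if mem: "(x, a) \<in> ?G" for s x a
  proof -
    obtain t where "x = t *\<^sub>R v" "a = t * p v" using mem by blast
    thus ?thesis by (auto intro!: exI[of _ "s * t"])
  qed
  show "a = b" if mem: "(x, a) \<in> ?G" "(x, b) \<in> ?G" for x a b
  proof -
    obtain t1 t2 where e: "x = t1 *\<^sub>R v" "a = t1 * p v" "x = t2 *\<^sub>R v" "b = t2 * p v"
      using mem by blast
    show ?thesis
    proof (cases "v = 0")
      case True thus ?thesis using e hom[of 0 0] by simp
    next
      case False thus ?thesis using e scaleR_cancel_right[of t1 v t2] by simp
    qed
  qed
  show "a \<le> p x" if "(x, a) \<in> ?G" for x a
    using that sublinear_scaleR_ge[OF sub hom] by auto
qed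

lemma maximal_dominated_graph:
  fixes p :: "'v::real_vector \<Rightarrow> real"
  assumes sub: "\<And>x y. p (x + y) \<le> p x + p y" and hom: "\<And>c x. 0 \<le> c \<Longrightarrow> p (c *\<^sub>R x) = c * p x"
  obtains M where "dominated_graph p M" "(v, p v) \<in> M"
    "\<And>X. dominated_graph p X \<Longrightarrow> (v, p v) \<in> X \<Longrightarrow> M \<subseteq> X \<Longrightarrow> X = M"
proof -
  let ?F = "{G. dominated_graph p G \<and> (v, p v) \<in> G}"
  have line: "{(t *\<^sub>R v, t * p v) | t. True} \<in> ?F"
    using dominated_graph_line[OF sub hom] by (auto intro!: exI[of _ 1])
  have "\<exists>M\<in>?F. \<forall>X\<in>?F. M \<subseteq> X \<longrightarrow> X = M"
  proof (rule Zorn_Lemma2, intro ballI)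
    fix C assume C: "C \<in> chains ?F"
    show "\<exists>U\<in>?F. \<forall>X\<in>C. X \<subseteq> U"
    proof (cases "C = {}")
      case False
      have "dominated_graph p (\<Union>C)"
        using C False by (intro dominated_graph_Union_chain) (auto simp: chains_def chain_subset_def)
      moreover have "(v, p v) \<in> \<Union>C" using C False by (auto simp: chains_def)
      ultimately show ?thesis by blast
    qed (use line in blast)
  qed
  thus ?thesis using that by blast
qed

theorem Hahn_Banach_sublinear:
  fixes p :: "'v::real_vector \<Rightarrow> real"
  assumes sub: "\<And>x y. p (x + y) \<le> p x + p y" and hom: "\<And>c x. 0 \<le> c \<Longrightarrow> p (c *\<^sub>R x) = c * p x"
  obtains \<phi> where "linear \<phi>" "\<And>x. \<phi> x \<le> p x" "\<phi> v = p v"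
proof -
  obtain M where M: "dominated_graph p M" "(v, p v) \<in> M"
    and M_max: "\<And>X. dominated_graph p X \<Longrightarrow> (v, p v) \<in> X \<Longrightarrow> M \<subseteq> X \<Longrightarrow> X = M"
    by (rule maximal_dominated_graph[of p v, OF sub hom]) (assumption | rule that)+
  have total: "\<exists>a. (x, a) \<in> M" for x
  proof (rule ccontr)
    assume "\<nexists>a. (x, a) \<in> M"
    then obtain c where c: "dominated_graph p {(y + t *\<^sub>R x, b + t * c) | y b t. (y, b) \<in> M}"
      using dominated_graph_extend[OF sub hom M(1)] by blast
    let ?M' = "{(y + t *\<^sub>R x, b + t * c) | y b t. (y, b) \<in> M}"
    have "(y + 0 *\<^sub>R x, b + 0 * c) \<in> ?M'" if "(y, b) \<in> M" for y b using that by blast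
    hence "M \<subseteq> ?M'" by auto
    hence "?M' = M" using M_max[OF c] M(2) by blast
    moreover have "(0 + 1 *\<^sub>R x, 0 + 1 * c) \<in> ?M'" using dominated_graphD(1)[OF M(1)] by blast
    ultimately show False using \<open>\<nexists>a. (x, a) \<in> M\<close> by simp
  qed
  define \<phi> where "\<phi> x = (THE a. (x, a) \<in> M)" for x
  have \<phi>_eq: "\<phi> x = a" if "(x, a) \<in> M" for x a
    unfolding \<phi>_def using that dominated_graphD(4)[OF M(1)] by blast
  have \<phi>_mem: "(x, \<phi> x) \<in> M" for x using total[of x] \<phi>_eq by blast
  show ?thesis
  proof (rule that)
    show "linear \<phi>"
    proof (rule linearI)
      show "\<phi> (x + y) = \<phi> x + \<phi> y" for x y
        by (rule \<phi>_eq[OF dominated_graphD(2)[OF M(1) \<phi>_mem \<phi>_mem]])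
      show "\<phi> (c *\<^sub>R x) = c *\<^sub>R \<phi> x" for c x
        using \<phi>_eq[OF dominated_graphD(3)[OF M(1) \<phi>_mem]] by simp
    qed
    show "\<phi> x \<le> p x" for x by (rule dominated_graphD(5)[OF M(1) \<phi>_mem])
    show "\<phi> v = p v" by (rule \<phi>_eq[OF M(2)])
  qed
qed

section \<open>Positive functionals and their band components\<close>

definition positive_functional :: "('a::banach_lattice \<Rightarrow> real) \<Rightarrow> bool" where
  "positive_functional \<phi> \<longleftrightarrow> linear \<phi> \<and> (\<forall>x. 0 \<le> x \<longrightarrow> 0 \<le> \<phi> x)"

lemma positive_functional_mono:
  assumes "positive_functional \<phi>" "x \<le> y"
  shows "\<phi> x \<le> \<phi> y"
proof -
  have "0 \<le> \<phi> (y - x)" using assms unfolding positive_functional_def by simp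
  thus ?thesis using assms(1) by (simp add: positive_functional_def linear_diff)
qed

text \<open>For \<open>\<phi> \<ge> 0\<close> and \<open>v \<ge> 0\<close>, on the positive cone \<open>band_component \<phi> v\<close> is the component of \<open>\<phi>\<close>
  in the band generated by \<open>v\<close>.\<close>
definition band_component :: "('a::banach_lattice \<Rightarrow> real) \<Rightarrow> 'a \<Rightarrow> 'a \<Rightarrow> real" where
  "band_component \<phi> v z = Sup {\<phi> (inf z (t *\<^sub>R v)) | t. 0 \<le> t}"

context
  fixes \<phi> :: "'a::banach_lattice \<Rightarrow> real" and v :: 'a
  assumes pos: "positive_functional \<phi>" and v: "0 \<le> v"
begin

private lemma lin: "linear \<phi>" using pos by (simp add: positive_functional_def)

private lemma bdd_above_band: "bdd_above {\<phi> (inf z (t *\<^sub>R v)) | t. 0 \<le> t}"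
  by (rule bdd_aboveI[where M = "\<phi> z"]) (auto intro: positive_functional_mono[OF pos])

lemma band_component_ge: "0 \<le> t \<Longrightarrow> \<phi> (inf z (t *\<^sub>R v)) \<le> band_component \<phi> v z"
  unfolding band_component_def by (rule cSup_upper) (use bdd_above_band in auto)

lemma band_component_leI:
  "(\<And>t. 0 \<le> t \<Longrightarrow> \<phi> (inf z (t *\<^sub>R v)) \<le> c) \<Longrightarrow> band_component \<phi> v z \<le> c"
  unfolding band_component_def by (rule cSup_least) auto

lemma band_component_le: "band_component \<phi> v z \<le> \<phi> z"
  by (rule band_component_leI) (auto intro: positive_functional_mono[OF pos])

lemma band_component_nonneg: "0 \<le> z \<Longrightarrow> 0 \<le> band_component \<phi> v z"
  using band_component_ge[of 0 z] linear_0[OF lin] by (simp add: inf_absorb2)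

lemma band_component_zero [simp]: "band_component \<phi> v 0 = 0"
  using band_component_le[of 0] band_component_nonneg[of 0] linear_0[OF lin] by simp

lemma band_component_mono: "z \<le> z' \<Longrightarrow> band_component \<phi> v z \<le> band_component \<phi> v z'"
proof (rule band_component_leI)
  fix t :: real assume "z \<le> z'" "0 \<le> t"
  hence "\<phi> (inf z (t *\<^sub>R v)) \<le> \<phi> (inf z' (t *\<^sub>R v))"
    by (intro positive_functional_mono[OF pos] inf_mono) auto
  also have "\<dots> \<le> band_component \<phi> v z'" using \<open>0 \<le> t\<close> by (rule band_component_ge)
  finally show "\<phi> (inf z (t *\<^sub>R v)) \<le> band_component \<phi> v z'" .
qed

lemma band_component_add:
  assumes "0 \<le> z" "0 \<le> z'"
  shows "band_component \<phi> v (z + z') = band_component \<phi> v z + band_component \<phi> v z'"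
proof (rule order.antisym)
  show "band_component \<phi> v (z + z') \<le> band_component \<phi> v z + band_component \<phi> v z'"
  proof (rule band_component_leI)
    fix t :: real assume t: "0 \<le> t"
    have "\<phi> (inf (z + z') (t *\<^sub>R v)) \<le> \<phi> (inf z (t *\<^sub>R v) + inf z' (t *\<^sub>R v))"
      using assms t v by (intro positive_functional_mono[OF pos] inf_add_le_add_inf) (simp_all add: scaleR_nonneg_nonneg)
    also have "\<dots> \<le> band_component \<phi> v z + band_component \<phi> v z'"
      using t by (simp add: linear_add[OF lin] add_mono band_component_ge)
    finally show "\<phi> (inf (z + z') (t *\<^sub>R v)) \<le> band_component \<phi> v z + band_component \<phi> v z'" .
  qed
  have "\<phi> (inf z (t *\<^sub>R v)) + \<phi> (inf z' (s *\<^sub>R v)) \<le> band_component \<phi> v (z + z')"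
    if "0 \<le> t" "0 \<le> s" for t s
  proof -
    have "inf z (t *\<^sub>R v) + inf z' (s *\<^sub>R v) \<le> inf (z + z') ((t + s) *\<^sub>R v)"
      by (auto simp: scaleR_add_left intro: add_mono)
    hence "\<phi> (inf z (t *\<^sub>R v)) + \<phi> (inf z' (s *\<^sub>R v)) \<le> \<phi> (inf (z + z') ((t + s) *\<^sub>R v))"
      using positive_functional_mono[OF pos] linear_add[OF lin] by metis
    also have "\<dots> \<le> band_component \<phi> v (z + z')" using that by (intro band_component_ge) simp
    finally show ?thesis .
  qed
  hence "band_component \<phi> v z' \<le> band_component \<phi> v (z + z') - \<phi> (inf z (t *\<^sub>R v))" if "0 \<le> t" for t
    using that by (intro band_component_leI) (simp add: algebra_simps)
  hence "band_component \<phi> v z \<le> band_component \<phi> v (z + z') - band_component \<phi> v z'"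
    by (intro band_component_leI) (simp add: algebra_simps)
  thus "band_component \<phi> v z + band_component \<phi> v z' \<le> band_component \<phi> v (z + z')" by simp
qed

lemma band_component_scaleR_le:
  assumes "0 < c"
  shows "band_component \<phi> v (c *\<^sub>R z) \<le> c * band_component \<phi> v z"
proof (rule band_component_leI)
  fix t :: real assume t: "0 \<le> t"
  have "inf (c *\<^sub>R z) (t *\<^sub>R v) = c *\<^sub>R inf z ((t / c) *\<^sub>R v)"
    using assms scaleR_inf_nonneg[of c z "(t / c) *\<^sub>R v"] by simp
  hence "\<phi> (inf (c *\<^sub>R z) (t *\<^sub>R v)) = c * \<phi> (inf z ((t / c) *\<^sub>R v))"
    by (simp add: linear_scale[OF lin])
  also have "\<dots> \<le> c * band_component \<phi> v z"
    using assms t by (intro mult_left_mono band_component_ge) auto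
  finally show "\<phi> (inf (c *\<^sub>R z) (t *\<^sub>R v)) \<le> c * band_component \<phi> v z" .
qed

lemma band_component_scaleR:
  assumes "0 \<le> c"
  shows "band_component \<phi> v (c *\<^sub>R z) = c * band_component \<phi> v z"
proof (cases "c = 0")
  case False
  hence c: "0 < c" using assms by simp
  have "band_component \<phi> v z \<le> (1 / c) * band_component \<phi> v (c *\<^sub>R z)"
    using band_component_scaleR_le[of "1 / c" "c *\<^sub>R z"] c by simp
  hence "c * band_component \<phi> v z \<le> band_component \<phi> v (c *\<^sub>R z)" using c by (simp add: field_simps)
  thus ?thesis using band_component_scaleR_le[OF c, of z] by simp
qed simp

lemma band_component_eq_0_if_disjoint:
  assumes "0 \<le> w" "inf w v = 0"
  shows "band_component \<phi> v w = 0"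
proof (rule order.antisym)
  show "band_component \<phi> v w \<le> 0"
  proof (rule band_component_leI)
    fix t :: real assume "0 \<le> t"
    hence "inf (1 *\<^sub>R w) (t *\<^sub>R v) = 0" using assms v by (intro inf_scaleR_eq_0) auto
    thus "\<phi> (inf w (t *\<^sub>R v)) \<le> 0" using linear_0[OF lin] by simp
  qed
qed (rule band_component_nonneg[OF assms(1)])

lemma band_component_approx:
  assumes "0 < d"
  obtains t where "0 \<le> t" "band_component \<phi> v z - d < \<phi> (inf z (t *\<^sub>R v))"
proof -
  have "band_component \<phi> v z - d < Sup {\<phi> (inf z (t *\<^sub>R v)) | t. 0 \<le> t}"
    using assms by (simp add: band_component_def)
  then obtain r where "r \<in> {\<phi> (inf z (t *\<^sub>R v)) | t. 0 \<le> t}" "band_component \<phi> v z - d < r"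
    using less_cSup_iff[OF _ bdd_above_band] by blast
  thus ?thesis using that by blast
qed

lemma band_component_self_ge: "\<phi> v \<le> band_component \<phi> v v"
  using band_component_ge[of 1 v] by simp

end

section \<open>Disjointly supported norming functionals\<close>

lemma positive_norming_functional:
  fixes v :: "'a::banach_lattice"
  assumes "0 \<le> v"
  obtains \<phi> where "positive_functional \<phi>" "\<And>x. \<phi> x \<le> norm x" "\<phi> v = norm v"
proof -
  have sub: "norm (pprt (x + y)) \<le> norm (pprt x) + norm (pprt y)" for x y :: 'a
    using pprt_add_le[of x y] by (intro norm_le_add_if_le_add) auto
  have hom: "norm (pprt (c *\<^sub>R x)) = c * norm (pprt x)" if "0 \<le> c" for c and x :: 'a
    using that by (simp add: pprt_scaleR)
  obtain \<phi> where \<phi>: "linear \<phi>" "\<And>x. \<phi> x \<le> norm (pprt x)" "\<phi> v = norm (pprt v)"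
    by (rule Hahn_Banach_sublinear[of "\<lambda>x. norm (pprt x)" v, OF sub hom]) (assumption | rule that)+
  have "0 \<le> \<phi> x" if "0 \<le> x" for x
    using \<phi>(2)[of "- x"] that by (simp add: linear_neg[OF \<phi>(1)])
  hence "positive_functional \<phi>" using \<phi>(1) by (simp add: positive_functional_def)
  moreover have "\<phi> x \<le> norm x" for x using \<phi>(2)[of x] norm_pprt_le[of x] by linarith
  ultimately show ?thesis using that \<phi>(3) assms by simp
qed

lemma band_component_dominated_functional:
  fixes \<phi> :: "'a::banach_lattice \<Rightarrow> real"
  assumes pos: "positive_functional \<phi>" and v: "0 \<le> v" and \<phi>_le: "\<And>x. \<phi> x \<le> norm x"
  obtains F :: "'a \<Rightarrow>\<^sub>L real" where "norm F \<le> 1" "\<And>x. F x \<le> band_component \<phi> v (pprt x)"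
    "F v = band_component \<phi> v v"
proof -
  let ?q = "\<lambda>x. band_component \<phi> v (pprt x)"
  have sub: "?q (x + y) \<le> ?q x + ?q y" for x y
  proof -
    have "?q (x + y) \<le> band_component \<phi> v (pprt x + pprt y)"
      using pprt_add_le by (rule band_component_mono[OF pos v])
    also have "\<dots> = ?q x + ?q y" by (simp add: band_component_add[OF pos v])
    finally show ?thesis .
  qed
  have hom: "?q (c *\<^sub>R x) = c * ?q x" if "0 \<le> c" for c x
    using that by (simp add: pprt_scaleR band_component_scaleR[OF pos v])
  obtain \<Phi> where \<Phi>: "linear \<Phi>" "\<And>x. \<Phi> x \<le> ?q x" "\<Phi> v = ?q v"
    by (rule Hahn_Banach_sublinear[of ?q v, OF sub hom]) (assumption | rule that)+
  have q_le: "?q x \<le> norm x" for x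
    using band_component_le[OF pos v, of "pprt x"] \<phi>_le[of "pprt x"] norm_pprt_le[of x] by linarith
  have "\<bar>\<Phi> x\<bar> \<le> norm x" for x
    using \<Phi>(2)[of x] \<Phi>(2)[of "- x"] q_le[of x] q_le[of "- x"] by (simp add: linear_neg[OF \<Phi>(1)])
  hence bl: "bounded_linear \<Phi>"
    using \<Phi>(1) by (intro bounded_linear_intro[where K = 1]) (simp_all add: linear_add linear_scale)
  show ?thesis
  proof (rule that[of "Blinfun \<Phi>"])
    show "norm (Blinfun \<Phi>) \<le> 1"
      by (rule norm_blinfun_bound) (simp_all add: bounded_linear_Blinfun_apply[OF bl] \<open>\<And>x. \<bar>\<Phi> x\<bar> \<le> norm x\<close>)
  qed (use \<Phi> v in \<open>simp_all add: bounded_linear_Blinfun_apply[OF bl]\<close>)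
qed

lemma dual_abs_le_band_component:
  fixes F :: "'a::banach_lattice \<Rightarrow>\<^sub>L real"
  assumes pos: "positive_functional \<phi>" and v: "0 \<le> v" and F: "\<And>x. F x \<le> band_component \<phi> v (pprt x)"
    and y: "0 \<le> y"
  shows "dual_abs F y \<le> band_component \<phi> v y"
proof (rule dual_abs_leI[OF y])
  fix z assume "- y \<le> z" "z \<le> y"
  hence "pprt z \<le> y" using y by (simp add: pprt_def)
  have "F z \<le> band_component \<phi> v (pprt z)" by (rule F)
  also have "\<dots> \<le> band_component \<phi> v y" using \<open>pprt z \<le> y\<close> by (rule band_component_mono[OF pos v])
  finally show "F z \<le> band_component \<phi> v y" .
qed

lemma exists_sign_norm_inf_pprt:
  fixes u w :: "'a::banach_lattice"
  assumes "0 \<le> u" "u \<le> lat_abs w"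
  obtains s :: real where "\<bar>s\<bar> = 1" "norm u / 2 \<le> norm (inf u (pprt (s *\<^sub>R w)))"
proof -
  have "u = inf (pprt w + pprt (- w)) u"
    using assms(2) by (simp add: lat_abs_eq_pprt_add_pprt_uminus inf_absorb2)
  also have "\<dots> \<le> inf (pprt w) u + inf (pprt (- w)) u" using assms(1) by (intro inf_add_le_add_inf) auto
  finally have "norm u \<le> norm (inf u (pprt w)) + norm (inf u (pprt (- w)))"
    using assms(1) by (intro norm_le_add_if_le_add) (simp_all add: inf_commute)
  thus ?thesis
  proof (cases "norm u / 2 \<le> norm (inf u (pprt w))")
    case True thus ?thesis using that[of 1] by simp
  next
    case False
    hence "norm u / 2 \<le> norm (inf u (pprt ((- 1) *\<^sub>R w)))" using \<open>norm u \<le> _\<close> by simp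
    thus ?thesis using that[of "- 1"] by simp
  qed
qed

lemma disjointly_supported_norming_functional:
  fixes u w :: "'a::banach_lattice"
  assumes u: "0 \<le> u" "u \<le> lat_abs w"
  obtains F :: "'a \<Rightarrow>\<^sub>L real" and \<phi> v where "norm F \<le> 1" "norm u / 2 \<le> \<bar>F w\<bar>"
    "0 \<le> v" "v \<le> u" "positive_functional \<phi>" "\<And>y. 0 \<le> y \<Longrightarrow> dual_abs F y \<le> band_component \<phi> v y"
proof -
  obtain s :: real where s: "\<bar>s\<bar> = 1" "norm u / 2 \<le> norm (inf u (pprt (s *\<^sub>R w)))"
    using exists_sign_norm_inf_pprt[OF u] by blast
  define w' where "w' = s *\<^sub>R w"
  define v where "v = inf u (pprt w')"
  have v: "0 \<le> v" "v \<le> u" "v \<le> pprt w'" using u(1) by (simp_all add: v_def)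
  have v_disj: "inf (pprt (- w')) v = 0"
    by (rule inf_eq_0_mono[of "pprt (- w')" "pprt (- w')" v "pprt w'"])
      (use v inf_pprt_pprt_uminus[of w'] in \<open>simp_all add: inf_commute\<close>)
  obtain \<phi> where \<phi>: "positive_functional \<phi>" "\<And>x. \<phi> x \<le> norm x" "\<phi> v = norm v"
    using positive_norming_functional[OF v(1)] by blast
  obtain F :: "'a \<Rightarrow>\<^sub>L real" where F: "norm F \<le> 1" "\<And>x. F x \<le> band_component \<phi> v (pprt x)" "F v = band_component \<phi> v v"
    using band_component_dominated_functional[OF \<phi>(1) v(1) \<phi>(2)] by blast
  have F_mono: "F x \<le> F y" if "x \<le> y" for x y
    using F(2)[of "x - y"] that by (simp add: blinfun.diff_right band_component_zero[OF \<phi>(1) v(1)])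
  have "norm v \<le> F v" using band_component_self_ge[OF \<phi>(1) v(1)] \<phi>(3) F(3) by simp
  also have "\<dots> \<le> F (pprt w')" using v(3) by (rule F_mono)
  also have "\<dots> \<le> F (pprt w') - F (pprt (- w'))"
    using F(2)[of "pprt (- w')"] band_component_eq_0_if_disjoint[OF \<phi>(1) v(1) _ v_disj] by simp
  also have "\<dots> = F (pprt w' - pprt (- w'))" by (simp only: blinfun.diff_right)
  also have "\<dots> = F w'" by (simp only: pprt_diff_pprt_uminus)
  also have "\<dots> \<le> \<bar>F w\<bar>"
    using s(1) abs_ge_self[of "s * F w"] by (simp add: w'_def blinfun.scaleR_right abs_mult)
  finally have "norm v \<le> \<bar>F w\<bar>" .
  show ?thesis
  proof (rule that)
    show "norm u / 2 \<le> \<bar>F w\<bar>" using s(2) \<open>norm v \<le> \<bar>F w\<bar>\<close> by (simp add: v_def w'_def)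
    show "dual_abs F y \<le> band_component \<phi> v y" if "0 \<le> y" for y
      using that by (rule dual_abs_le_band_component[OF \<phi>(1) v(1) F(2)])
  qed (use F(1) v(1,2) \<phi>(1) in simp_all)
qed

lemma Inf_eq_0_if_nonneg_arbitrarily_small:
  fixes S :: "real set"
  assumes "S \<noteq> {}" "\<And>r. r \<in> S \<Longrightarrow> 0 \<le> r" "\<And>d. 0 < d \<Longrightarrow> \<exists>r\<in>S. r < d"
  shows "Inf S = 0"
proof (rule order.antisym)
  show "0 \<le> Inf S" using assms(1,2) by (rule cInf_greatest)
  show "Inf S \<le> 0"
  proof (rule ccontr)
    assume "\<not> Inf S \<le> 0"
    then obtain r where "r \<in> S" "r < Inf S" using assms(3)[of "Inf S"] by auto
    moreover have "Inf S \<le> r" using \<open>r \<in> S\<close> assms(2) by (intro cInf_lower bdd_belowI) auto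
    ultimately show False by simp
  qed
qed

lemma band_component_dual_disjoint:
  fixes F1 F2 :: "'a::banach_lattice \<Rightarrow>\<^sub>L real"
  assumes p1: "positive_functional \<phi>1" and p2: "positive_functional \<phi>2"
    and v: "0 \<le> v1" "0 \<le> v2" "inf v1 v2 = 0"
    and F1: "\<And>y. 0 \<le> y \<Longrightarrow> dual_abs F1 y \<le> band_component \<phi>1 v1 y"
    and F2: "\<And>y. 0 \<le> y \<Longrightarrow> dual_abs F2 y \<le> band_component \<phi>2 v2 y"
  shows "dual_disjoint F1 F2"
  unfolding dual_disjoint_def
proof (intro allI impI Inf_eq_0_if_nonneg_arbitrarily_small)
  fix x :: 'a assume x: "0 \<le> x"
  let ?S = "{dual_abs F1 y + dual_abs F2 (x - y) | y. 0 \<le> y \<and> y \<le> x}"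
  show "?S \<noteq> {}" using x by blast
  show "0 \<le> r" if "r \<in> ?S" for r
    using that by (auto intro!: add_nonneg_nonneg dual_abs_nonneg)
  show "\<exists>r\<in>?S. r < d" if d: "0 < d" for d
  proof -
    obtain t where t: "0 \<le> t" "band_component \<phi>2 v2 x - d < \<phi>2 (inf x (t *\<^sub>R v2))"
      using band_component_approx[OF p2 v(2) d] by blast
    define y where "y = inf x (t *\<^sub>R v2)"
    have y: "0 \<le> y" "y \<le> x" "y \<le> t *\<^sub>R v2"
      using x t v(2) by (simp_all add: y_def scaleR_nonneg_nonneg)
    have "inf (t *\<^sub>R v2) (1 *\<^sub>R v1) = 0" using v t by (intro inf_scaleR_eq_0) (simp_all add: inf_commute)
    hence "inf y v1 = 0" using y v by (intro inf_eq_0_mono[of y "t *\<^sub>R v2" v1 v1]) simp_all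
    with y(1) have c1: "band_component \<phi>1 v1 y = 0" by (rule band_component_eq_0_if_disjoint[OF p1 v(1)])
    have "band_component \<phi>2 v2 (x - y) + band_component \<phi>2 v2 y = band_component \<phi>2 v2 x"
      using band_component_add[OF p2 v(2), of "x - y" y] y by simp
    moreover have "\<phi>2 y \<le> band_component \<phi>2 v2 y"
      using band_component_ge[OF p2 v(2) t(1), of y] y(3) by (simp add: inf_absorb1)
    ultimately have "band_component \<phi>1 v1 y + band_component \<phi>2 v2 (x - y) < d"
      using c1 t(2) by (simp add: y_def)
    moreover have "dual_abs F1 y + dual_abs F2 (x - y) \<le> band_component \<phi>1 v1 y + band_component \<phi>2 v2 (x - y)"
      using F1[OF y(1)] F2[of "x - y"] y(2) by simp
    ultimately show ?thesis using y(1,2) by force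
  qed
qed

lemma disjoint_norming_functionals:
  fixes u w :: "nat \<Rightarrow> 'a::banach_lattice"
  assumes u: "\<And>i. 0 \<le> u i" "\<And>i. u i \<le> lat_abs (w i)" "\<And>i j. i \<noteq> j \<Longrightarrow> inf (u i) (u j) = 0"
  obtains F :: "nat \<Rightarrow> 'a \<Rightarrow>\<^sub>L real" where "\<And>i. norm (F i) \<le> 1"
    "\<And>i. norm (u i) / 2 \<le> \<bar>F i (w i)\<bar>" "\<And>i j. i \<noteq> j \<Longrightarrow> dual_disjoint (F i) (F j)"
proof -
  define P where "P i F \<phi> v \<longleftrightarrow> norm F \<le> 1 \<and> norm (u i) / 2 \<le> \<bar>blinfun_apply F (w i)\<bar>
    \<and> 0 \<le> v \<and> v \<le> u i \<and> positive_functional \<phi>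
    \<and> (\<forall>y. 0 \<le> y \<longrightarrow> dual_abs F y \<le> band_component \<phi> v y)" for i F \<phi> v
  have "\<forall>i. \<exists>F \<phi> v. P i F \<phi> v"
  proof
    fix i
    obtain F :: "'a \<Rightarrow>\<^sub>L real" and \<phi> v where "norm F \<le> 1" "norm (u i) / 2 \<le> \<bar>F (w i)\<bar>"
      "0 \<le> v" "v \<le> u i" "positive_functional \<phi>" "\<And>y. 0 \<le> y \<Longrightarrow> dual_abs F y \<le> band_component \<phi> v y"
      by (rule disjointly_supported_norming_functional[OF u(1) u(2)]) (rule that)
    thus "\<exists>F \<phi> v. P i F \<phi> v" unfolding P_def by blast
  qed
  from choice[OF this] obtain F where "\<forall>i. \<exists>\<phi> v. P i (F i) \<phi> v" by blast
  from choice[OF this] obtain \<phi> where "\<forall>i. \<exists>v. P i (F i) (\<phi> i) v" by blast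
  from choice[OF this] obtain v where "\<forall>i. P i (F i) (\<phi> i) (v i)" by blast
  hence F: "\<And>i. norm (F i) \<le> 1" "\<And>i. norm (u i) / 2 \<le> \<bar>F i (w i)\<bar>" "\<And>i. 0 \<le> v i"
    "\<And>i. v i \<le> u i" "\<And>i. positive_functional (\<phi> i)"
    "\<And>i y. 0 \<le> y \<Longrightarrow> dual_abs (F i) y \<le> band_component (\<phi> i) (v i) y"
    unfolding P_def by blast+
  show ?thesis
  proof (rule that[OF F(1,2)])
    fix i j :: nat assume "i \<noteq> j"
    have "inf (v i) (v j) = 0" by (rule inf_eq_0_mono[OF F(3) F(4) F(3) F(4) u(3)[OF \<open>i \<noteq> j\<close>]])
    thus "dual_disjoint (F i) (F j)" by (rule band_component_dual_disjoint[OF F(5) F(5) F(3) F(3) _ F(6) F(6)])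
  qed
qed

section \<open>Limitedly L-weakly compact operators\<close>

lemma limited_set_singleton: "limited_set {x}"
  unfolding limited_set_def
proof (intro conjI allI impI)
  fix g :: "nat \<Rightarrow> 'a \<Rightarrow>\<^sub>L real" and e :: real
  assume g: "\<forall>x. (\<lambda>n. blinfun_apply (g n) x) \<longlonglongrightarrow> 0" and e: "0 < e"
  have "\<forall>\<^sub>F n in sequentially. dist (blinfun_apply (g n) x) 0 < e"
    using g e by (intro tendstoD) auto
  thus "\<forall>\<^sub>F n in sequentially. \<forall>a\<in>{x}. \<bar>blinfun_apply (g n) a\<bar> < e" by simp
qed simp

lemma Lwc_set_singleton_lat_abs: "Lwc_set {lat_abs x} \<longleftrightarrow> Lwc_set {x}"
  by (simp add: Lwc_set_def sol_def lat_abs_eq_self lat_abs_nonneg)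

lemma limitedly_LWC_dual_disjoint_tendsto:
  assumes T: "limitedly_LWC T"
    and f: "bounded (range f)" "\<And>n m. n \<noteq> m \<Longrightarrow> dual_disjoint (f n) (f m)"
  shows "(\<lambda>n. blinfun_apply (f n) (T x)) \<longlonglongrightarrow> 0"
proof -
  have "Lwc_set (T ` {x})" using T limited_set_singleton unfolding limitedly_LWC_def by blast
  hence "Lwc_set {lat_abs (T x)}" by (simp add: Lwc_set_singleton_lat_abs)
  hence lim: "(\<lambda>n. dual_abs (f n) (lat_abs (T x))) \<longlonglongrightarrow> 0"
    using lat_abs_nonneg f by (rule Lwc_singleton_dual_disjoint_tendsto)
  have "\<forall>n. norm (blinfun_apply (f n) (T x)) \<le> dual_abs (f n) (lat_abs (T x))"
    using abs_le_dual_abs[of "f _" "T x"] by simp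
  thus ?thesis by (rule Lim_null_comparison[OF always_eventually lim])
qed

lemma dual_disjoint_null_imp_limitedly_LWC:
  fixes T :: "'a::banach \<Rightarrow> 'b::banach_lattice"
  assumes T: "bounded_linear T"
    and H: "\<And>(f :: nat \<Rightarrow> ('b \<Rightarrow>\<^sub>L real)) z. bounded (range f) \<Longrightarrow>
      (\<forall>n m. n \<noteq> m \<longrightarrow> dual_disjoint (f n) (f m)) \<Longrightarrow> (\<lambda>n. f n (T z)) \<longlonglongrightarrow> 0"
  shows "limitedly_LWC T"
  unfolding limitedly_LWC_def Lwc_set_def
proof (intro allI impI, elim conjE)
  fix A :: "'a set" and x :: "nat \<Rightarrow> 'b"
  assume A: "limited_set A" and x: "\<forall>n. x n \<in> sol (T ` A)" "disjoint_seq x"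
  show "(\<lambda>n. norm (x n)) \<longlonglongrightarrow> 0"
  proof (rule ccontr)
    assume "\<not> ?thesis"
    then obtain r and \<sigma> :: "nat \<Rightarrow> nat" where r: "0 < r" "strict_mono \<sigma>" "\<And>n. r \<le> \<bar>norm (x (\<sigma> n))\<bar>"
      by (rule not_tendsto_0_subseq) blast
    define u where "u i = lat_abs (x (\<sigma> i))" for i
    have "\<forall>i. \<exists>a. a \<in> A \<and> u i \<le> lat_abs (T a)" using x(1) by (auto simp: sol_def u_def)
    from choice[OF this] obtain a where a: "\<And>i. a i \<in> A" "\<And>i. u i \<le> lat_abs (T (a i))" by blast
    have u0: "0 \<le> u i" for i unfolding u_def by (rule lat_abs_nonneg)
    have u_disj: "inf (u i) (u j) = 0" if "i \<noteq> j" for i j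
      using x(2) that strict_mono_eq[OF r(2)] by (simp add: disjoint_seq_def u_def)
    obtain F :: "nat \<Rightarrow> 'b \<Rightarrow>\<^sub>L real" where F: "\<And>i. norm (F i) \<le> 1"
      "\<And>i. norm (u i) / 2 \<le> \<bar>F i (T (a i))\<bar>" "\<And>i j. i \<noteq> j \<Longrightarrow> dual_disjoint (F i) (F j)"
      by (rule disjoint_norming_functionals[of u "\<lambda>i. T (a i)", OF u0 a(2) u_disj]) (assumption | rule that)+
    have "bounded (range F)" using F(1) by (auto simp: bounded_iff)
    hence lim: "(\<lambda>n. F n (T z)) \<longlonglongrightarrow> 0" for z using F(3) by (intro H) blast+
    define G where "G n = F n o\<^sub>L Blinfun T" for n
    have G: "blinfun_apply (G n) z = F n (T z)" for n z
      by (simp add: G_def bounded_linear_Blinfun_apply[OF T])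
    have "\<forall>z. (\<lambda>n. blinfun_apply (G n) z) \<longlonglongrightarrow> 0" using lim by (simp add: G)
    with A have "\<forall>e>0. \<forall>\<^sub>F n in sequentially. \<forall>b\<in>A. \<bar>blinfun_apply (G n) b\<bar> < e"
      unfolding limited_set_def by blast
    then obtain N where "\<forall>n\<ge>N. \<forall>b\<in>A. \<bar>blinfun_apply (G n) b\<bar> < r / 2"
      using r(1) unfolding eventually_sequentially by (meson half_gt_zero)
    hence "\<bar>F N (T (a N))\<bar> < r / 2" using a(1)[of N] by (simp add: G)
    moreover have "r / 2 \<le> \<bar>F N (T (a N))\<bar>"
      using r(3)[of N] F(2)[of N] by (simp add: u_def norm_lat_abs)
    ultimately show False by simp
  qed
qed

theorem theorem2p8:
  fixes T :: "'a::banach \<Rightarrow> 'b::banach_lattice"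
  assumes "bounded_linear T"
  shows "limitedly_LWC T \<longleftrightarrow>
    (\<forall>f :: nat \<Rightarrow> ('b \<Rightarrow>\<^sub>L real).
       bounded (range f) \<and> (\<forall>n m. n \<noteq> m \<longrightarrow> dual_disjoint (f n) (f m)) \<longrightarrow>
       (\<forall>x. (\<lambda>n. blinfun_apply (f n) (T x)) \<longlonglongrightarrow> 0))"
  using limitedly_LWC_dual_disjoint_tendsto dual_disjoint_null_imp_limitedly_LWC[OF assms] by blast

end
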